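(* For every $E\subseteq\mathbb{F}_q^2$, $$\sum_{\theta\in O(\mathbb{F}_q^2)}\sum_{w\in\mathbb{F}_q^2}\Big(\lambda_\theta(w)-\frac{|E|^2}{q^2}\Big)^2\lesssim q|E|^{5/2},\qquad \sum_{\theta\in O(\mathbb{F}_q^2)}\sum_{w\in\mathbb{F}_q^2}\lambda_\theta(w)^2\lesssim q|E|^{5/2}+\frac{|E|^4}{q}.$$
   Context: Standing assumptions: $q=p^n$ with $p$ a prime, $p\equiv 3\pmod 4$, $n$ odd. $O(\mathbb{F}_q^2)$ is the group of $2\times2$ matrices $\theta$ over $\mathbb{F}_q$ with $\theta^T\theta=I$. For $E\subseteq\mathbb{F}_q^2$, $\theta\in O(\mathbb{F}_q^2)$, $w\in\mathbb{F}_q^2$: $\lambda_\theta(w)=|\{(u,v)\in E^2: u-\theta v=w\}|$. $A\lesssim B$ means $A\le cB$ with $c$ independent of $q$ and $E$. *)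

theory Defs
  imports Complex_Main "HOL-Algebra.Ring" "HOL-Computational_Algebra.Primes"
begin

text \<open>Vectors of F_q^2 are pairs of field elements. A 2x2 matrix
  theta = [[a,b],[c,d]] is represented by the quadruple (a,b,c,d).\<close>

type_synonym 'a mat2 = "'a \<times> 'a \<times> 'a \<times> 'a"

definition mat2_apply :: "('a, 'b) ring_scheme \<Rightarrow> 'a mat2 \<Rightarrow> 'a \<times> 'a \<Rightarrow> 'a \<times> 'a" where
  "mat2_apply R \<theta> v = (case \<theta> of (a, b, c, d) \<Rightarrow>
     (a \<otimes>\<^bsub>R\<^esub> fst v \<oplus>\<^bsub>R\<^esub> b \<otimes>\<^bsub>R\<^esub> snd v,
      c \<otimes>\<^bsub>R\<^esub> fst v \<oplus>\<^bsub>R\<^esub> d \<otimes>\<^bsub>R\<^esub> snd v))"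

definition orth2 :: "('a, 'b) ring_scheme \<Rightarrow> 'a mat2 set" where
  "orth2 R = {(a, b, c, d). a \<in> carrier R \<and> b \<in> carrier R \<and> c \<in> carrier R \<and> d \<in> carrier R \<and>
     a \<otimes>\<^bsub>R\<^esub> a \<oplus>\<^bsub>R\<^esub> c \<otimes>\<^bsub>R\<^esub> c = \<one>\<^bsub>R\<^esub> \<and>
     b \<otimes>\<^bsub>R\<^esub> b \<oplus>\<^bsub>R\<^esub> d \<otimes>\<^bsub>R\<^esub> d = \<one>\<^bsub>R\<^esub> \<and>
     a \<otimes>\<^bsub>R\<^esub> b \<oplus>\<^bsub>R\<^esub> c \<otimes>\<^bsub>R\<^esub> d = \<zero>\<^bsub>R\<^esub>}"

definition vsub :: "('a, 'b) ring_scheme \<Rightarrow> 'a \<times> 'a \<Rightarrow> 'a \<times> 'a \<Rightarrow> 'a \<times> 'a" where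
  "vsub R u v = (fst u \<ominus>\<^bsub>R\<^esub> fst v, snd u \<ominus>\<^bsub>R\<^esub> snd v)"

definition lam :: "('a, 'b) ring_scheme \<Rightarrow> ('a \<times> 'a) set \<Rightarrow> 'a mat2 \<Rightarrow> 'a \<times> 'a \<Rightarrow> nat" where
  "lam R E \<theta> w = card {(u, v) \<in> E \<times> E. vsub R u (mat2_apply R \<theta> v) = w}"

end

(*
  Fix a nontrivial additive character \<chi> of F_q and let F(m) = \<Sum>_{u \<in> E} \<chi>(m \<cdot> u).
  Since \<Sum>_w \<lambda>_\<theta>(w) \<chi>(w \<cdot> m) = F(m) conj(F(\<theta>\<^sup>T m)), Plancherel gives
  q\<^sup>2 \<Sum>_w \<lambda>_\<theta>(w)\<^sup>2 = \<Sum>_m |F(m)|\<^sup>2 |F(\<theta>\<^sup>T m)|\<^sup>2, and the term m = 0 accounts for the mean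
  |E|\<^sup>2 / q\<^sup>2 of \<lambda>_\<theta>.  As q \<equiv> 3 (mod 4), the form x\<^sub>1\<^sup>2 + x\<^sub>2\<^sup>2 is anisotropic; hence for m \<noteq> 0
  the vectors \<theta>\<^sup>T m cover the circle through m at most twice, and a nonzero vector is the
  sum of two points of a circle in at most two ways.  The latter bounds the additive energy
  of circles, and Cauchy-Schwarz turns this into the restriction estimate
  \<Sum>_{m on a circle} |F(m)|\<^sup>2 \<le> \<surd>3 q |E|^(3/2).  With \<Sum>_m |F(m)|\<^sup>2 = q\<^sup>2 |E| this gives the first
  bound with constant 2\<surd>3 < 4; the second adds the mean term |O(F_q\<^sup>2)| |E|\<^sup>4 / q\<^sup>2 \<le> 4 |E|\<^sup>4 / q.
*)

theory Submission
  imports Defs "HOL-Algebra.Multiplicative_Group" "HOL-Number_Theory.Cong" "HOL-Analysis.Convex"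
begin

lemma prime_power_mod_4:
  fixes p n :: nat
  assumes "p mod 4 = 3" and "odd n"
  shows "p ^ n mod 4 = 3"
proof -
  obtain k where n: "n = 2 * k + 1" using \<open>odd n\<close> oddE by blast
  have nine: "(9::nat) ^ k mod 4 = 1" using power_mod[of "9::nat" 4 k] by simp
  have "p ^ n mod 4 = 3 ^ n mod 4" using assms(1) power_mod[of p 4 n] by simp
  also have "(3::nat) ^ n = 3 * 9 ^ k" by (simp add: n power_add power_mult)
  finally show ?thesis using nine mod_mult_right_eq[of "3::nat" "9 ^ k" 4] by simp
qed

lemma cis_2pi_div_mod:
  assumes "n > 0"
  shows "cis (2 * pi * real (a mod n) / real n) = cis (2 * pi * real a / real n)"
proof -
  have "real a = real (a mod n) + real n * real (a div n)"
    by (metis of_nat_add of_nat_mult mod_div_mult_eq mult.commute)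
  then have "2 * pi * real a / real n = 2 * pi * real (a mod n) / real n + 2 * pi * real (a div n)"
    using assms by (simp add: field_simps)
  then have "cis (2 * pi * real a / real n) = cis (2 * pi * real (a mod n) / real n) * cis (2 * pi * real (a div n))"
    by (simp only: cis_mult)
  then show ?thesis by simp
qed

lemma cis_2pi_div_neq_1:
  assumes "n > 1"
  shows "cis (2 * pi / real n) \<noteq> 1"
proof
  assume "cis (2 * pi / real n) = 1"
  then have "cos (2 * pi / real n) = 1" by (simp add: complex_eq_iff)
  then obtain k :: int where k: "2 * pi / real n = real_of_int k * 2 * pi" using cos_one_2pi_int by blast
  then have "real_of_int (k * int n) = 1" using assms by (simp add: field_simps)
  then have "int n dvd 1" by (metis dvd_triv_right of_int_eq_1_iff)
  then show False using assms by simp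
qed

lemma sum_comp_le_by_fibers:
  fixes g :: "'b \<Rightarrow> real"
  assumes "finite A" and "finite B" and "f ` A \<subseteq> B"
    and fibers: "\<And>b. b \<in> B \<Longrightarrow> card {a\<in>A. f a = b} \<le> k"
    and nonneg: "\<And>b. b \<in> B \<Longrightarrow> g b \<ge> 0"
  shows "(\<Sum>a\<in>A. g (f a)) \<le> real k * (\<Sum>b\<in>B. g b)"
proof -
  have "(\<Sum>a\<in>A. g (f a)) = (\<Sum>b\<in>f ` A. \<Sum>a\<in>{a\<in>A. f a = b}. g (f a))"
    by (rule sum.image_gen[OF assms(1)])
  also have "\<dots> = (\<Sum>b\<in>f ` A. real (card {a\<in>A. f a = b}) * g b)"
    by (intro sum.cong refl) simp
  also have "\<dots> \<le> (\<Sum>b\<in>f ` A. real k * g b)"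
    using assms by (intro sum_mono mult_right_mono) auto
  also have "\<dots> \<le> (\<Sum>b\<in>B. real k * g b)"
    using assms by (intro sum_mono2) auto
  finally show ?thesis by (simp add: sum_distrib_left)
qed

lemma card_le_by_fibers:
  assumes "finite A" and "finite B" and "f ` A \<subseteq> B"
    and "\<And>b. b \<in> B \<Longrightarrow> card {a\<in>A. f a = b} \<le> k"
  shows "card A \<le> k * card B"
  using sum_comp_le_by_fibers[OF assms, of "\<lambda>_. 1"] by (simp flip: of_nat_mult)

lemma mult_sqrt_cube_eq_powr:
  fixes x :: real
  assumes "x \<ge> 0"
  shows "x * sqrt (x ^ 3) = x powr (5/2)"
proof (cases "x = 0")
  case False
  then have "x > 0" using assms by simp
  have "x powr (5/2) = x powr 2 * x powr (1/2)" by (simp flip: powr_add)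
  also have "\<dots> = x ^ 2 * sqrt x" using \<open>x > 0\<close> by (simp add: powr_half_sqrt powr_numeral)
  also have "sqrt (x ^ 3) = x * sqrt x"
    using assms by (simp add: power3_eq_cube real_sqrt_mult real_sqrt_mult_self)
  ultimately show ?thesis by (simp add: power2_eq_square)
qed simp

section \<open>Finite fields of order \<open>q \<equiv> 3 (mod 4)\<close>\<close>

context ring
begin

lemma add_pow_card_eq_zero:
  assumes "finite (carrier R)" and "x \<in> carrier R"
  shows "[card (carrier R)] \<cdot> x = \<zero>"
  using add.pow_order_eq_1[of x] assms unfolding order_def by (simp add: add_pow_def)

lemma add_pow_one_mult: "[(a * b :: nat)] \<cdot> \<one> = [a] \<cdot> \<one> \<otimes> [b] \<cdot> \<one>"
  using add_pow_ldistr[of \<one> "[b] \<cdot> \<one>" a] add.nat_pow_pow[of \<one> a b]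
  by (simp add: mult.commute)

lemma add_pow_one_power: "[(a ^ k :: nat)] \<cdot> \<one> = ([a] \<cdot> \<one>) [^] k"
proof (induction k)
  case (Suc k)
  then show ?case using add_pow_one_mult[of "a ^ k" a] by (simp add: power_Suc2 del: power_Suc)
qed simp

lemma add_pow_char_eq_zero:
  fixes p :: nat
  assumes "[p] \<cdot> \<one> = \<zero>" and "x \<in> carrier R"
  shows "[p] \<cdot> x = \<zero>"
  using add_pow_ldistr[of \<one> x p] assms by simp

lemma add_pow_mod_char:
  fixes p :: nat
  assumes "[p] \<cdot> \<one> = \<zero>" and "x \<in> carrier R"
  shows "[(i :: nat)] \<cdot> x = [(i mod p)] \<cdot> x"
proof -
  have "[i] \<cdot> x = [(i mod p)] \<cdot> x \<oplus> [(i div p)] \<cdot> ([p] \<cdot> x)"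
    using assms(2) by (simp add: add.nat_pow_mult add.nat_pow_pow mult.commute)
  then show ?thesis using add_pow_char_eq_zero[OF assms] assms(2) by simp
qed

end

lemma (in domain) add_pow_one_eq_zero_if_card_power:
  fixes p :: nat
  assumes "finite (carrier R)" and "card (carrier R) = p ^ n"
  shows "[p] \<cdot> \<one> = \<zero>"
proof (rule ccontr)
  assume "[p] \<cdot> \<one> \<noteq> \<zero>"
  then have "([p] \<cdot> \<one>) [^] n \<noteq> \<zero>" by (induction n) (simp_all add: integral_iff)
  then show False
    using add_pow_card_eq_zero[OF assms(1), of \<one>] assms(2) add_pow_one_power by simp
qed

lemma (in domain) square_eq_square_iff:
  assumes "x \<in> carrier R" and "y \<in> carrier R"
  shows "x \<otimes> x = y \<otimes> y \<longleftrightarrow> x = y \<or> x = \<ominus> y"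
proof
  assume h: "x \<otimes> x = y \<otimes> y"
  have "(x \<ominus> y) \<otimes> (x \<oplus> y) = x \<otimes> x \<ominus> y \<otimes> y" using assms by algebra
  also have "\<dots> = \<zero>" using h assms by (simp add: r_right_minus_eq)
  finally have "x \<ominus> y = \<zero> \<or> x \<oplus> y = \<zero>" using assms integral by blast
  then show "x = y \<or> x = \<ominus> y"
    using assms by (metis a_minus_def add.inv_closed add.inv_comm add.l_cancel_one' minus_equality r_right_minus_eq)
qed (use assms in \<open>auto simp: l_minus r_minus\<close>)

locale finite_field = field +
  assumes finite_carrier: "finite (carrier R)"
begin

lemma pow_card_minus_one:
  assumes "x \<in> carrier R" and "x \<noteq> \<zero>"
  shows "x [^] (card (carrier R) - 1) = \<one>"
  using group.pow_order_eq_1[OF field_mult_group, of x] order_mult_of[OF finite_carrier] assms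
  by (simp add: nat_pow_mult_of order_def)

lemma one_plus_one_neq_zero:
  assumes "odd (card (carrier R))"
  shows "\<one> \<oplus> \<one> \<noteq> \<zero>"
proof
  assume two: "\<one> \<oplus> \<one> = \<zero>"
  obtain k where k: "card (carrier R) = Suc (2 * k)" using assms oddE by fastforce
  have "[card (carrier R)] \<cdot> \<one> = [k] \<cdot> ([(2::nat)] \<cdot> \<one>) \<oplus> \<one>"
    unfolding k by (simp add: add.nat_pow_pow)
  also have "[(2::nat)] \<cdot> \<one> = \<one> \<oplus> \<one>" by (simp add: numeral_2_eq_2)
  finally show False using two add_pow_card_eq_zero[OF finite_carrier, of \<one>] by simp
qed

end

locale finite_field_3_mod_4 = finite_field +
  assumes card_mod_4: "card (carrier R) mod 4 = 3"
begin

text \<open>As \<open>(q - 1) / 2\<close> is odd, \<open>x\<^sup>2 = -1\<close> would give \<open>1 = x ^ (q - 1) = (-1) ^ ((q - 1) / 2) = -1\<close>.\<close>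
lemma minus_one_not_square:
  assumes x: "x \<in> carrier R"
  shows "x \<otimes> x \<noteq> \<ominus> \<one>"
proof
  assume sq: "x \<otimes> x = \<ominus> \<one>"
  have "x \<noteq> \<zero>"
  proof
    assume "x = \<zero>"
    then have "\<ominus> \<one> = \<zero>" using sq by simp
    then show False by (metis minus_minus minus_zero one_closed one_not_zero)
  qed
  have "\<exists>k. card (carrier R) - 1 = 2 * (2 * k + 1)" using card_mod_4 by presburger
  then obtain k where k: "card (carrier R) - 1 = 2 * (2 * k + 1)" ..
  have m1: "\<ominus> \<one> \<otimes> \<ominus> \<one> = \<one>" by (simp add: l_minus r_minus)
  have "\<one> = x [^] (2 * (2 * k + 1))" using pow_card_minus_one[OF x \<open>x \<noteq> \<zero>\<close>] k by simp
  also have "\<dots> = (x [^] (2::nat)) [^] (2 * k + 1)" by (rule nat_pow_pow[symmetric, OF x])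
  also have "x [^] (2::nat) = \<ominus> \<one>" using sq x by (simp add: numeral_2_eq_2)
  also have "(\<ominus> \<one>) [^] (2 * k + 1) = ((\<ominus> \<one>) [^] (2::nat)) [^] k \<otimes> \<ominus> \<one>"
    by (simp add: nat_pow_pow)
  also have "(\<ominus> \<one>) [^] (2::nat) = \<one>" using m1 by (simp add: numeral_2_eq_2)
  finally have "\<ominus> \<one> = \<one>" by simp
  then have "\<one> \<oplus> \<one> = \<zero>" by (metis l_neg one_closed)
  moreover have "odd (card (carrier R))" using card_mod_4 by presburger
  ultimately show False using one_plus_one_neq_zero by blast
qed

lemma sum_squares_eq_zero_iff:
  assumes a: "a \<in> carrier R" and b: "b \<in> carrier R"
  shows "a \<otimes> a \<oplus> b \<otimes> b = \<zero> \<longleftrightarrow> a = \<zero> \<and> b = \<zero>"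
proof
  assume h: "a \<otimes> a \<oplus> b \<otimes> b = \<zero>"
  show "a = \<zero> \<and> b = \<zero>"
  proof (cases "b = \<zero>")
    case True
    then show ?thesis using h a by (simp add: integral_iff)
  next
    case False
    then have ib: "inv b \<in> carrier R" "b \<otimes> inv b = \<one>" using b by (simp_all add: field_Units)
    define c where "c = a \<otimes> inv b"
    have c: "c \<in> carrier R" using a ib by (simp add: c_def)
    have "c \<otimes> c \<oplus> \<one> = (a \<otimes> a \<oplus> b \<otimes> b) \<otimes> (inv b \<otimes> inv b) \<oplus> (\<one> \<ominus> (b \<otimes> inv b) \<otimes> (b \<otimes> inv b))"
      using a b ib(1) unfolding c_def by algebra
    also have "\<dots> = \<zero>" using h ib by (simp add: a_minus_def r_neg)
    finally have "c \<otimes> c = \<ominus> \<one>" using c by (simp add: add.inv_equality)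
    then show ?thesis using minus_one_not_square[OF c] by blast
  qed
qed simp

end

section \<open>A nontrivial additive character\<close>

lemma (in abelian_group) additive_subgroup_intro:
  assumes "M \<subseteq> carrier G" and "\<zero> \<in> M"
    and "\<And>a b. a \<in> M \<Longrightarrow> b \<in> M \<Longrightarrow> a \<oplus> b \<in> M" and "\<And>a. a \<in> M \<Longrightarrow> \<ominus> a \<in> M"
  shows "additive_subgroup M G"
  using assms by (intro additive_subgroupI add.subgroupI) (auto simp: a_inv_def)

lemma (in ring) additive_subgroup_add_pow_closed:
  assumes "additive_subgroup M R" and "m \<in> M"
  shows "[(j :: nat)] \<cdot> m \<in> M"
  using assms by (induction j) (simp_all add: additive_subgroup.zero_closed additive_subgroup.a_closed)

locale prime_char_ring = ring +
  fixes p :: nat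
  assumes finite_carrier: "finite (carrier R)" and prime_p: "prime p"
    and char_p: "[p] \<cdot> \<one> = \<zero>" and one_neq_zero: "\<one> \<noteq> \<zero>"
begin

lemma add_pow_inverse:
  assumes "d mod p \<noteq> 0" and x: "x \<in> carrier R"
  obtains d' :: nat where "[d'] \<cdot> ([d] \<cdot> x) = x"
proof -
  have "\<not> p dvd d" using assms(1) by (simp add: dvd_eq_mod_eq_0)
  then have "coprime d p" using prime_p by (metis coprime_commute prime_imp_coprime)
  then obtain d' where "[d * d' = 1] (mod p)" using cong_solve_coprime_nat by auto
  then have "(d * d') mod p = 1 mod p" by (simp add: cong_def)
  then have "[d'] \<cdot> ([d] \<cdot> x) = x"
    using add_pow_mod_char[OF char_p x, of "d * d'"] add_pow_mod_char[OF char_p x, of 1] x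
    by (simp add: add.nat_pow_pow mult.commute)
  then show thesis by (rule that)
qed

definition avoids_one :: "'a set \<Rightarrow> bool" where
  "avoids_one M \<longleftrightarrow> additive_subgroup M R \<and> \<one> \<notin> M"

text \<open>Viewing \<open>carrier R\<close> as a vector space over \<open>\<int>/p\<close>, a largest additive subgroup
  avoiding \<open>\<one>\<close> is a hyperplane complementary to the line through \<open>\<one>\<close>; the character sends
  \<open>m \<oplus> [j] \<cdot> \<one>\<close> to \<open>exp (2 \<pi> i j / p)\<close>.\<close>
definition hyperplane :: "'a set" where
  "hyperplane = (SOME M. avoids_one M \<and> (\<forall>M'. avoids_one M' \<longrightarrow> card M' \<le> card M))"

lemma hyperplane_exists: "\<exists>M. avoids_one M \<and> (\<forall>M'. avoids_one M' \<longrightarrow> card M' \<le> card M)"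
proof -
  have "Collect avoids_one \<subseteq> Pow (carrier R)"
    using additive_subgroup.a_subset unfolding avoids_one_def by blast
  then have fin: "finite (card ` Collect avoids_one)"
    using finite_carrier by (simp add: finite_subset)
  have "{\<zero>} \<in> Collect avoids_one"
    using one_neq_zero by (auto simp: avoids_one_def intro: additive_subgroup_intro)
  then have "Max (card ` Collect avoids_one) \<in> card ` Collect avoids_one"
    using fin by (intro Max_in) auto
  then obtain M where "avoids_one M" "card M = Max (card ` Collect avoids_one)" by auto
  then show ?thesis using fin by (intro exI[of _ M]) simp
qed

lemma hyperplane:
  "additive_subgroup hyperplane R" "\<one> \<notin> hyperplane"
  "\<And>M. avoids_one M \<Longrightarrow> card M \<le> card hyperplane"
proof -
  have "avoids_one hyperplane \<and> (\<forall>M. avoids_one M \<longrightarrow> card M \<le> card hyperplane)"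
    unfolding hyperplane_def by (rule someI_ex[OF hyperplane_exists])
  then show "additive_subgroup hyperplane R" "\<one> \<notin> hyperplane"
    "\<And>M. avoids_one M \<Longrightarrow> card M \<le> card hyperplane"
    unfolding avoids_one_def by blast+
qed

lemma hyperplane_carrier: "m \<in> hyperplane \<Longrightarrow> m \<in> carrier R"
  using additive_subgroup.a_subset[OF hyperplane(1)] by blast

lemma add_pow_one_in_hyperplane:
  assumes "[d] \<cdot> \<one> \<in> hyperplane"
  shows "d mod p = 0"
proof (rule ccontr)
  assume "d mod p \<noteq> 0"
  from add_pow_inverse[OF this one_closed]
  obtain d' :: nat where "[d'] \<cdot> ([d] \<cdot> \<one>) = \<one>" .
  moreover have "[d'] \<cdot> ([d] \<cdot> \<one>) \<in> hyperplane"
    using additive_subgroup_add_pow_closed[OF hyperplane(1) assms] .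
  ultimately have "\<one> \<in> hyperplane" by simp
  then show False using hyperplane(2) by blast
qed

definition hyperplane_extension :: "'a \<Rightarrow> 'a set" where
  "hyperplane_extension y = {m \<oplus> [(j :: nat)] \<cdot> y | m j. m \<in> hyperplane}"

lemma minus_add_pow:
  assumes "y \<in> carrier R"
  shows "\<ominus> ([(j :: nat)] \<cdot> y) = [(j * (p - 1))] \<cdot> y"
proof -
  have "[(j * (p - 1))] \<cdot> y \<oplus> [j] \<cdot> y = [j] \<cdot> ([p] \<cdot> y)"
    using assms prime_gt_1_nat[OF prime_p]
    by (simp add: add.nat_pow_mult add.nat_pow_pow algebra_simps)
  then show ?thesis using add_pow_char_eq_zero[OF char_p assms] assms
    by (intro minus_equality) simp_all
qed

lemma additive_subgroup_hyperplane_extension: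
  assumes y: "y \<in> carrier R"
  shows "additive_subgroup (hyperplane_extension y) R"
proof (rule additive_subgroup_intro)
  note H = hyperplane(1) hyperplane_carrier
  show "hyperplane_extension y \<subseteq> carrier R"
    using y H by (auto simp: hyperplane_extension_def)
  show "\<zero> \<in> hyperplane_extension y"
    unfolding hyperplane_extension_def using y H
    by (auto intro!: exI[of _ \<zero>] exI[of _ "0::nat"] additive_subgroup.zero_closed)
  show "a \<oplus> b \<in> hyperplane_extension y"
    if ab: "a \<in> hyperplane_extension y" "b \<in> hyperplane_extension y" for a b
  proof -
    obtain m m' and j j' :: nat
      where "a = m \<oplus> [j] \<cdot> y" "b = m' \<oplus> [j'] \<cdot> y" "m \<in> hyperplane" "m' \<in> hyperplane"
      using ab unfolding hyperplane_extension_def by blast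
    moreover have "a \<oplus> b = (m \<oplus> m') \<oplus> [(j + j')] \<cdot> y"
      using calculation y H by (simp add: a_ac add.nat_pow_mult[symmetric])
    ultimately show ?thesis
      unfolding hyperplane_extension_def using H by (blast intro: additive_subgroup.a_closed)
  qed
  show "\<ominus> a \<in> hyperplane_extension y" if a: "a \<in> hyperplane_extension y" for a
  proof -
    obtain m and j :: nat where "a = m \<oplus> [j] \<cdot> y" "m \<in> hyperplane"
      using a unfolding hyperplane_extension_def by blast
    moreover have "\<ominus> a = \<ominus> m \<oplus> [(j * (p - 1))] \<cdot> y"
      using calculation y H by (simp add: minus_add minus_add_pow)
    ultimately show ?thesis
      unfolding hyperplane_extension_def using H by (blast intro: additive_subgroup.a_inv_closed)
  qed
qed

lemma one_in_hyperplane_extension: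
  assumes y: "y \<in> carrier R" and "y \<notin> hyperplane"
  shows "\<one> \<in> hyperplane_extension y"
proof -
  have "hyperplane \<subseteq> hyperplane_extension y"
  proof
    fix m assume "m \<in> hyperplane"
    moreover have "m = m \<oplus> [(0::nat)] \<cdot> y" using calculation y hyperplane_carrier by simp
    ultimately show "m \<in> hyperplane_extension y" unfolding hyperplane_extension_def by blast
  qed
  moreover have "y \<in> hyperplane_extension y"
    unfolding hyperplane_extension_def using y hyperplane(1)
    by (auto intro!: exI[of _ \<zero>] exI[of _ "1::nat"] simp: additive_subgroup.zero_closed)
  ultimately have "hyperplane \<subset> hyperplane_extension y" using \<open>y \<notin> hyperplane\<close> by blast
  moreover have "finite (hyperplane_extension y)"
    using additive_subgroup.a_subset[OF additive_subgroup_hyperplane_extension[OF y]]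
      finite_carrier finite_subset by blast
  ultimately have "card hyperplane < card (hyperplane_extension y)" by (rule psubset_card_mono[rotated])
  then have "\<not> avoids_one (hyperplane_extension y)" using hyperplane(3) by force
  then show "\<one> \<in> hyperplane_extension y"
    using additive_subgroup_hyperplane_extension[OF y] unfolding avoids_one_def by blast
qed

lemma hyperplane_decomposition:
  assumes y: "y \<in> carrier R"
  obtains m and j :: nat where "m \<in> hyperplane" and "y = m \<oplus> [j] \<cdot> \<one>"
proof (cases "y \<in> hyperplane")
  case True
  then show thesis using that[of y 0] y by simp
next
  case False
  then obtain m and i :: nat where mi: "\<one> = m \<oplus> [i] \<cdot> y" "m \<in> hyperplane"
    using one_in_hyperplane_extension[OF y] unfolding hyperplane_extension_def by blast
  have m: "m \<in> carrier R" using mi(2) hyperplane_carrier by blast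
  have "i mod p \<noteq> 0"
  proof
    assume "i mod p = 0"
    then have "[i] \<cdot> y = \<zero>" using add_pow_mod_char[OF char_p y, of i] by simp
    then show False using mi m hyperplane(2) by simp
  qed
  from add_pow_inverse[OF this y] obtain i' :: nat where "[i'] \<cdot> ([i] \<cdot> y) = y" .
  moreover have "[i] \<cdot> y = \<ominus> m \<oplus> \<one>" using mi m y by (simp add: a_assoc[symmetric] l_neg)
  ultimately have "y = [i'] \<cdot> (\<ominus> m) \<oplus> [i'] \<cdot> \<one>" using m by (simp add: add.nat_pow_distrib)
  moreover have "[i'] \<cdot> (\<ominus> m) \<in> hyperplane"
    using mi(2) hyperplane(1) by (simp add: additive_subgroup_add_pow_closed additive_subgroup.a_inv_closed)
  ultimately show thesis by (rule that[rotated])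
qed

lemma hyperplane_decomposition_unique:
  assumes "m \<in> hyperplane" and "m' \<in> hyperplane"
    and "m \<oplus> [(j :: nat)] \<cdot> \<one> = m' \<oplus> [(j' :: nat)] \<cdot> \<one>"
  shows "j mod p = j' mod p"
proof -
  have ordered: "j mod p = j' mod p"
    if m: "m \<in> hyperplane" "m' \<in> hyperplane" and eq: "m \<oplus> [j] \<cdot> \<one> = m' \<oplus> [j'] \<cdot> \<one>"
      and "j' \<le> j" for m m' j j'
  proof -
    have mc: "m \<in> carrier R" "m' \<in> carrier R" using m hyperplane_carrier by blast+
    define a b where "a = [j'] \<cdot> \<one>" and "b = [(j - j')] \<cdot> \<one>"
    have ab: "a \<in> carrier R" "b \<in> carrier R" by (simp_all add: a_def b_def)
    have eq': "m \<oplus> (a \<oplus> b) = m' \<oplus> a"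
      using eq \<open>j' \<le> j\<close> by (simp add: a_def b_def add.nat_pow_mult)
    have "b = (m \<oplus> (a \<oplus> b)) \<oplus> \<ominus> a \<oplus> \<ominus> m" using mc ab by algebra
    also have "\<dots> = (m' \<oplus> a) \<oplus> \<ominus> a \<oplus> \<ominus> m" by (simp only: eq')
    also have "\<dots> = m' \<oplus> \<ominus> m" using mc ab by algebra
    also have "\<dots> \<in> hyperplane"
      using m hyperplane(1) by (simp add: additive_subgroup.a_closed additive_subgroup.a_inv_closed)
    finally have "(j - j') mod p = 0" unfolding b_def by (rule add_pow_one_in_hyperplane)
    then show ?thesis using \<open>j' \<le> j\<close> by (simp add: mod_eq_dvd_iff_nat dvd_eq_mod_eq_0)
  qed
  show ?thesis
    using ordered[OF assms] ordered[OF assms(2,1) assms(3)[symmetric]] by linarith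
qed

definition coordinate :: "'a \<Rightarrow> nat" where
  "coordinate y = (SOME j. \<exists>m\<in>hyperplane. y = m \<oplus> [j] \<cdot> \<one>)"

definition character :: "'a \<Rightarrow> complex" where
  "character y = cis (2 * pi * real (coordinate y) / real p)"

lemma character_decomposition:
  assumes m: "m \<in> hyperplane"
  shows "character (m \<oplus> [(j :: nat)] \<cdot> \<one>) = cis (2 * pi * real j / real p)"
proof -
  let ?y = "m \<oplus> [j] \<cdot> \<one>"
  have "\<exists>j' :: nat. \<exists>m'\<in>hyperplane. ?y = m' \<oplus> [j'] \<cdot> \<one>" using m by blast
  then have "\<exists>m'\<in>hyperplane. ?y = m' \<oplus> [coordinate ?y] \<cdot> \<one>"
    unfolding coordinate_def by (rule someI_ex)
  then obtain m' where "m' \<in> hyperplane" "?y = m' \<oplus> [coordinate ?y] \<cdot> \<one>" by blast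
  then have "coordinate ?y mod p = j mod p"
    using hyperplane_decomposition_unique[OF _ m] by metis
  then show ?thesis
    unfolding character_def using cis_2pi_div_mod[of p] prime_gt_0_nat[OF prime_p] by metis
qed

lemma character_add:
  assumes "x \<in> carrier R" and "y \<in> carrier R"
  shows "character (x \<oplus> y) = character x * character y"
proof -
  obtain m and j :: nat where mj: "m \<in> hyperplane" "x = m \<oplus> [j] \<cdot> \<one>"
    using hyperplane_decomposition assms(1) .
  obtain m' and j' :: nat where mj': "m' \<in> hyperplane" "y = m' \<oplus> [j'] \<cdot> \<one>"
    using hyperplane_decomposition assms(2) .
  have "x \<oplus> y = (m \<oplus> m') \<oplus> [(j + j')] \<cdot> \<one>"
    using mj mj' hyperplane_carrier by (simp add: a_ac add.nat_pow_mult[symmetric])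
  moreover have "m \<oplus> m' \<in> hyperplane" using mj mj' hyperplane(1) by (simp add: additive_subgroup.a_closed)
  ultimately show ?thesis
    using mj mj' character_decomposition by (simp add: cis_mult[symmetric] add_divide_distrib distrib_left)
qed

lemma norm_character: "cmod (character y) = 1"
  by (simp add: character_def)

lemma character_one: "character \<one> \<noteq> 1"
  using character_decomposition[of \<zero> 1] hyperplane(1) prime_gt_1_nat[OF prime_p] cis_2pi_div_neq_1
  by (simp add: additive_subgroup.zero_closed)

end

lemma (in ring) additive_character_exists:
  fixes p :: nat
  assumes "finite (carrier R)" and "prime p" and "[p] \<cdot> \<one> = \<zero>" and "\<one> \<noteq> \<zero>"
  shows "\<exists>\<psi> :: 'a \<Rightarrow> complex. (\<forall>x\<in>carrier R. \<forall>y\<in>carrier R. \<psi> (x \<oplus> y) = \<psi> x * \<psi> y)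
    \<and> (\<forall>x. cmod (\<psi> x) = 1) \<and> \<psi> \<one> \<noteq> 1"
proof -
  interpret prime_char_ring R p
    using assms by unfold_locales
  show ?thesis using character_add norm_character character_one by blast
qed

section \<open>Fourier analysis on the plane\<close>

definition vadd :: "('a, 'b) ring_scheme \<Rightarrow> 'a \<times> 'a \<Rightarrow> 'a \<times> 'a \<Rightarrow> 'a \<times> 'a" where
  "vadd R u v = (fst u \<oplus>\<^bsub>R\<^esub> fst v, snd u \<oplus>\<^bsub>R\<^esub> snd v)"

definition dot :: "('a, 'b) ring_scheme \<Rightarrow> 'a \<times> 'a \<Rightarrow> 'a \<times> 'a \<Rightarrow> 'a" where
  "dot R u v = fst u \<otimes>\<^bsub>R\<^esub> fst v \<oplus>\<^bsub>R\<^esub> snd u \<otimes>\<^bsub>R\<^esub> snd v"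

context finite_field
begin

abbreviation q :: nat where "q \<equiv> card (carrier R)"
abbreviation F2 :: "('a \<times> 'a) set" where "F2 \<equiv> carrier R \<times> carrier R"

lemma finite_F2: "finite F2"
  using finite_carrier by simp

lemma card_F2: "card F2 = q ^ 2"
  by (simp add: card_cartesian_product power2_eq_square)

lemma q_pos: "q > 0"
  using finite_carrier by (auto simp: card_gt_0_iff)

lemma vsub_closed: "z \<in> F2 \<Longrightarrow> z' \<in> F2 \<Longrightarrow> vsub R z z' \<in> F2"
  by (auto simp: vsub_def)

lemma vadd_closed: "z \<in> F2 \<Longrightarrow> z' \<in> F2 \<Longrightarrow> vadd R z z' \<in> F2"
  by (auto simp: vadd_def)

lemma dot_closed: "z \<in> F2 \<Longrightarrow> x \<in> F2 \<Longrightarrow> dot R z x \<in> carrier R"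
  by (auto simp: dot_def)

lemma vsub_eq_zero_iff: "z \<in> F2 \<Longrightarrow> z' \<in> F2 \<Longrightarrow> vsub R z z' = (\<zero>, \<zero>) \<longleftrightarrow> z = z'"
  by (cases z, cases z') (auto simp: vsub_def r_right_minus_eq)

end

locale additive_character = finite_field +
  fixes chi :: "'a \<Rightarrow> complex"
  assumes chi_add: "x \<in> carrier R \<Longrightarrow> y \<in> carrier R \<Longrightarrow> chi (x \<oplus> y) = chi x * chi y"
    and norm_chi: "x \<in> carrier R \<Longrightarrow> cmod (chi x) = 1"
    and chi_nontrivial: "\<exists>x\<in>carrier R. chi x \<noteq> 1"
begin

definition e :: "'a \<times> 'a \<Rightarrow> 'a \<times> 'a \<Rightarrow> complex" where
  "e z x = chi (dot R z x)"

definition fourier :: "('a \<times> 'a) set \<Rightarrow> 'a \<times> 'a \<Rightarrow> complex" where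
  "fourier E m = (\<Sum>u\<in>E. e m u)"

lemma chi_zero: "chi \<zero> = 1"
proof -
  have "chi \<zero> = chi \<zero> * chi \<zero>" using chi_add[of \<zero> \<zero>] by simp
  moreover have "chi \<zero> \<noteq> 0" using norm_chi[of \<zero>] by auto
  ultimately show ?thesis by (metis mult_cancel_left1)
qed

lemma chi_minus:
  assumes "x \<in> carrier R"
  shows "chi (\<ominus> x) = cnj (chi x)"
proof -
  have "chi x * chi (\<ominus> x) = 1" using chi_add[of x "\<ominus> x"] assms chi_zero by (simp add: r_neg)
  moreover have "chi x * cnj (chi x) = 1" using norm_chi[OF assms] by (simp add: complex_norm_square[symmetric])
  ultimately show ?thesis by (metis mult.left_commute mult.right_neutral mult.commute)
qed

lemma chi_diff: "x \<in> carrier R \<Longrightarrow> y \<in> carrier R \<Longrightarrow> chi (x \<ominus> y) = chi x * cnj (chi y)"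
  by (simp add: a_minus_def chi_add chi_minus)

lemma sum_chi_mult:
  assumes a: "a \<in> carrier R"
  shows "(\<Sum>x\<in>carrier R. chi (a \<otimes> x)) = (if a = \<zero> then of_nat q else 0)"
proof (cases "a = \<zero>")
  case True then show ?thesis using chi_zero by simp
next
  case False
  obtain x0 where x0: "x0 \<in> carrier R" "chi x0 \<noteq> 1" using chi_nontrivial by blast
  define y0 where "y0 = inv a \<otimes> x0"
  have y0: "y0 \<in> carrier R" "a \<otimes> y0 = x0"
    using False a x0 by (simp_all add: y0_def field_Units m_assoc[symmetric])
  let ?S = "\<Sum>x\<in>carrier R. chi (a \<otimes> x)"
  have "bij_betw (\<lambda>x. x \<oplus> y0) (carrier R) (carrier R)"
    by (rule bij_betwI[where g = "\<lambda>x. x \<ominus> y0"]) (use y0 in \<open>auto, algebra+\<close>)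
  then have "?S = (\<Sum>x\<in>carrier R. chi (a \<otimes> (x \<oplus> y0)))"
    using sum.reindex_bij_betw[of "\<lambda>x. x \<oplus> y0" "carrier R" "carrier R" "\<lambda>x. chi (a \<otimes> x)"] by simp
  also have "\<dots> = ?S * chi x0"
    using y0 a x0(1) by (simp add: r_distr chi_add sum_distrib_right)
  finally have "?S * (1 - chi x0) = 0" by (simp add: algebra_simps)
  then show ?thesis using x0 False by simp
qed

lemma sum_e:
  assumes "z \<in> F2"
  shows "(\<Sum>x\<in>F2. e z x) = (if z = (\<zero>, \<zero>) then of_nat q ^ 2 else 0)"
proof -
  have "(\<Sum>x\<in>F2. e z x) = (\<Sum>x1\<in>carrier R. \<Sum>x2\<in>carrier R. e z (x1, x2))"
    by (simp add: sum.cartesian_product)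
  also have "\<dots> = (\<Sum>x1\<in>carrier R. \<Sum>x2\<in>carrier R. chi (fst z \<otimes> x1) * chi (snd z \<otimes> x2))"
    using assms by (intro sum.cong refl) (auto simp: e_def dot_def chi_add)
  also have "\<dots> = (\<Sum>x1\<in>carrier R. chi (fst z \<otimes> x1)) * (\<Sum>x2\<in>carrier R. chi (snd z \<otimes> x2))"
    by (simp add: sum_product)
  finally have "(\<Sum>x\<in>F2. e z x) = \<dots>" .
  then show ?thesis
    using assms sum_chi_mult[of "fst z"] sum_chi_mult[of "snd z"] by (cases z) (auto simp: power2_eq_square)
qed

lemma e_commute: "z \<in> F2 \<Longrightarrow> x \<in> F2 \<Longrightarrow> e z x = e x z"
  by (auto simp: e_def dot_def m_comm)

lemma e_vsub:
  assumes "z \<in> F2" "z' \<in> F2" "x \<in> F2"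
  shows "e (vsub R z z') x = e z x * cnj (e z' x)"
proof -
  have "dot R (vsub R z z') x = dot R z x \<ominus> dot R z' x"
    using assms unfolding dot_def vsub_def by (cases z, cases z', cases x) (simp, algebra)
  then show ?thesis using assms by (simp add: e_def chi_diff dot_closed vsub_closed)
qed

lemma e_vadd:
  assumes "z \<in> F2" "z' \<in> F2" "x \<in> F2"
  shows "e (vadd R z z') x = e z x * e z' x"
proof -
  have "dot R (vadd R z z') x = dot R z x \<oplus> dot R z' x"
    using assms unfolding dot_def vadd_def by (cases z, cases z', cases x) (simp, algebra)
  then show ?thesis using assms by (simp add: e_def chi_add dot_closed vadd_closed)
qed

lemma e_orthogonal:
  assumes "z \<in> F2" "z' \<in> F2"
  shows "(\<Sum>x\<in>F2. e z x * cnj (e z' x)) = (if z = z' then of_nat q ^ 2 else 0)"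
  using sum_e[OF vsub_closed[OF assms]] vsub_eq_zero_iff[OF assms] assms
  by (simp add: e_vsub[symmetric])

lemma plancherel:
  "(\<Sum>x\<in>F2. (cmod (\<Sum>z\<in>F2. c z * e z x))\<^sup>2) = real q ^ 2 * (\<Sum>z\<in>F2. (cmod (c z))\<^sup>2)"
proof -
  have "complex_of_real (\<Sum>x\<in>F2. (cmod (\<Sum>z\<in>F2. c z * e z x))\<^sup>2)
      = (\<Sum>x\<in>F2. (\<Sum>z\<in>F2. c z * e z x) * cnj (\<Sum>z\<in>F2. c z * e z x))"
    by (simp only: of_real_sum complex_norm_square)
  also have "\<dots> = (\<Sum>x\<in>F2. \<Sum>z\<in>F2. \<Sum>z'\<in>F2. c z * cnj (c z') * (e z x * cnj (e z' x)))"
    by (simp add: sum_product algebra_simps)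
  also have "\<dots> = (\<Sum>z\<in>F2. \<Sum>x\<in>F2. \<Sum>z'\<in>F2. c z * cnj (c z') * (e z x * cnj (e z' x)))"
    by (rule sum.swap)
  also have "\<dots> = (\<Sum>z\<in>F2. \<Sum>z'\<in>F2. \<Sum>x\<in>F2. c z * cnj (c z') * (e z x * cnj (e z' x)))"
    by (intro sum.cong refl sum.swap)
  also have "\<dots> = (\<Sum>z\<in>F2. \<Sum>z'\<in>F2. c z * cnj (c z') * (\<Sum>x\<in>F2. e z x * cnj (e z' x)))"
    by (simp add: sum_distrib_left)
  also have "\<dots> = (\<Sum>z\<in>F2. c z * cnj (c z) * of_nat q ^ 2)"
    by (intro sum.cong refl) (simp add: e_orthogonal if_distrib sum.delta'[OF finite_F2] cong: if_cong)
  also have "\<dots> = of_nat q ^ 2 * (\<Sum>z\<in>F2. c z * cnj (c z))"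
    by (simp add: sum_distrib_left algebra_simps)
  also have "(\<Sum>z\<in>F2. c z * cnj (c z)) = complex_of_real (\<Sum>z\<in>F2. (cmod (c z))\<^sup>2)"
    by (simp only: of_real_sum complex_norm_square)
  also have "of_nat q ^ 2 * complex_of_real (\<Sum>z\<in>F2. (cmod (c z))\<^sup>2)
      = complex_of_real (real q ^ 2 * (\<Sum>z\<in>F2. (cmod (c z))\<^sup>2))"
    by simp
  finally show ?thesis by (simp only: of_real_eq_iff)
qed

lemma plancherel_fourier:
  assumes "E \<subseteq> F2"
  shows "(\<Sum>m\<in>F2. (cmod (fourier E m))\<^sup>2) = real q ^ 2 * real (card E)"
proof -
  let ?c = "\<lambda>z. if z \<in> E then 1 else 0 :: complex"
  have "fourier E m = (\<Sum>z\<in>F2. ?c z * e z m)" if "m \<in> F2" for m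
  proof -
    have "(\<Sum>z\<in>F2. ?c z * e z m) = (\<Sum>z\<in>F2. if z \<in> E then e z m else 0)"
      by (intro sum.cong) auto
    also have "\<dots> = (\<Sum>z\<in>F2 \<inter> E. e z m)"
      by (rule sum.inter_restrict[OF finite_F2, symmetric])
    also have "\<dots> = fourier E m"
      unfolding fourier_def using assms that
      by (simp add: Int_absorb1) (intro sum.cong refl e_commute; blast)
    finally show ?thesis by simp
  qed
  then have "(\<Sum>m\<in>F2. (cmod (fourier E m))\<^sup>2) = real q ^ 2 * (\<Sum>z\<in>F2. (cmod (?c z))\<^sup>2)"
    by (simp add: plancherel)
  also have "(\<Sum>z\<in>F2. (cmod (?c z))\<^sup>2) = (\<Sum>z\<in>F2. if z \<in> E then 1 else 0)"
    by (intro sum.cong) auto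
  also have "\<dots> = real (card E)"
    using assms by (simp add: sum.inter_restrict[OF finite_F2, symmetric] Int_absorb1)
  finally show ?thesis .
qed

lemma fourier_zero:
  assumes "E \<subseteq> F2"
  shows "fourier E (\<zero>, \<zero>) = of_nat (card E)"
proof -
  have "fourier E (\<zero>, \<zero>) = (\<Sum>u\<in>E. 1)"
    unfolding fourier_def using assms by (intro sum.cong refl) (auto simp: e_def dot_def chi_zero)
  then show ?thesis by simp
qed

end

section \<open>The orthogonal group and circles\<close>

definition mat2_transpose :: "'a mat2 \<Rightarrow> 'a mat2" where
  "mat2_transpose \<theta> = (case \<theta> of (a, b, c, d) \<Rightarrow> (a, c, b, d))"

lemma orth2_carrier:
  "(a, b, c, d) \<in> orth2 R \<Longrightarrow> a \<in> carrier R \<and> b \<in> carrier R \<and> c \<in> carrier R \<and> d \<in> carrier R"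
  by (simp add: orth2_def)

lemma finite_orth2:
  assumes "finite (carrier R)"
  shows "finite (orth2 R)"
proof (rule finite_subset)
  show "orth2 R \<subseteq> carrier R \<times> carrier R \<times> carrier R \<times> carrier R" by (auto simp: orth2_def)
qed (use assms in simp)

definition (in ring) is_rotation :: "'a mat2 \<Rightarrow> bool" where
  "is_rotation \<theta> = (case \<theta> of (a, b, c, d) \<Rightarrow> b = \<ominus> c \<and> d = a)"

context domain
begin

text \<open>With \<open>k = a d - b c\<close> one gets \<open>d = k a\<close>, \<open>b = -k c\<close> and \<open>k\<^sup>2 = 1\<close>.\<close>
lemma orth2_cases:
  assumes "(a, b, c, d) \<in> orth2 R"
  shows "(b = \<ominus> c \<and> d = a) \<or> (b = c \<and> d = \<ominus> a)"
proof -
  have cr: "a \<in> carrier R" "b \<in> carrier R" "c \<in> carrier R" "d \<in> carrier R"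
    and h1: "a \<otimes> a \<oplus> c \<otimes> c = \<one>" and h2: "b \<otimes> b \<oplus> d \<otimes> d = \<one>"
    and h3: "a \<otimes> b \<oplus> c \<otimes> d = \<zero>" using assms by (auto simp: orth2_def)
  define k where "k = a \<otimes> d \<ominus> b \<otimes> c"
  have k: "k \<in> carrier R" using cr by (simp add: k_def)
  have "k \<otimes> a = d \<otimes> (a \<otimes> a \<oplus> c \<otimes> c) \<ominus> c \<otimes> (a \<otimes> b \<oplus> c \<otimes> d)"
    using cr unfolding k_def by algebra
  then have ka: "k \<otimes> a = d" using h1 h3 cr by (simp add: minus_eq)
  have "k \<otimes> c = a \<otimes> (a \<otimes> b \<oplus> c \<otimes> d) \<ominus> b \<otimes> (a \<otimes> a \<oplus> c \<otimes> c)"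
    using cr unfolding k_def by algebra
  then have kc: "k \<otimes> c = \<ominus> b" using h1 h3 cr by (simp add: minus_eq)
  have "b = \<ominus> (k \<otimes> c)" using kc cr by simp
  then have "b \<otimes> b \<oplus> d \<otimes> d = (\<ominus> (k \<otimes> c)) \<otimes> (\<ominus> (k \<otimes> c)) \<oplus> (k \<otimes> a) \<otimes> (k \<otimes> a)"
    using ka by simp
  also have "\<dots> = (k \<otimes> k) \<otimes> (a \<otimes> a \<oplus> c \<otimes> c)" using cr k by algebra
  finally have "\<one> = (k \<otimes> k) \<otimes> (a \<otimes> a \<oplus> c \<otimes> c)" using h2 by simp
  then have "\<one> = (k \<otimes> k) \<otimes> \<one>" by (simp only: h1)
  then have "\<one> = k \<otimes> k" using k by (simp only: r_one m_closed)
  then have "k \<otimes> k = \<one> \<otimes> \<one>" by (metis l_one one_closed)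
  then have "k = \<one> \<or> k = \<ominus> \<one>" using square_eq_square_iff[OF k one_closed] by blast
  then show ?thesis
  proof
    assume "k = \<ominus> \<one>"
    then have "d = \<ominus> a" "\<ominus> c = \<ominus> b" using ka kc cr by (simp_all add: l_minus)
    then show ?thesis using cr by (metis minus_minus)
  qed (use ka kc cr in simp)
qed

lemma mat2_apply_closed:
  assumes "\<theta> \<in> orth2 R" and "v \<in> carrier R \<times> carrier R"
  shows "mat2_apply R \<theta> v \<in> carrier R \<times> carrier R"
    and "mat2_apply R (mat2_transpose \<theta>) v \<in> carrier R \<times> carrier R"
  using assms by (cases \<theta>, auto simp: mat2_apply_def mat2_transpose_def orth2_def)+

lemma mat2_transpose_apply_zero:
  "\<theta> \<in> orth2 R \<Longrightarrow> mat2_apply R (mat2_transpose \<theta>) (\<zero>, \<zero>) = (\<zero>, \<zero>)"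
  by (cases \<theta>) (auto simp: mat2_apply_def mat2_transpose_def orth2_def)

lemma dot_mat2_apply:
  assumes "\<theta> \<in> orth2 R" and "m \<in> carrier R \<times> carrier R" and "v \<in> carrier R \<times> carrier R"
  shows "dot R m (mat2_apply R \<theta> v) = dot R (mat2_apply R (mat2_transpose \<theta>) m) v"
  using assms by (cases \<theta>, cases m, cases v)
    (simp add: orth2_def dot_def mat2_apply_def mat2_transpose_def, algebra)

lemma dot_self_mat2_transpose_apply:
  assumes "\<theta> \<in> orth2 R" and "m \<in> carrier R \<times> carrier R"
  shows "dot R (mat2_apply R (mat2_transpose \<theta>) m) (mat2_apply R (mat2_transpose \<theta>) m) = dot R m m"
proof -
  obtain a b c d where \<theta>: "\<theta> = (a, b, c, d)" by (cases \<theta>) auto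
  obtain m1 m2 where m: "m = (m1, m2)" by (cases m)
  have cr: "a \<in> carrier R" "c \<in> carrier R" "m1 \<in> carrier R" "m2 \<in> carrier R"
    and norm: "a \<otimes> a \<oplus> c \<otimes> c = \<one>" using assms by (auto simp: \<theta> m orth2_def)
  have "(a \<otimes> m1 \<oplus> c \<otimes> m2) \<otimes> (a \<otimes> m1 \<oplus> c \<otimes> m2) \<oplus> (\<ominus> c \<otimes> m1 \<oplus> a \<otimes> m2) \<otimes> (\<ominus> c \<otimes> m1 \<oplus> a \<otimes> m2)
      = (a \<otimes> a \<oplus> c \<otimes> c) \<otimes> (m1 \<otimes> m1 \<oplus> m2 \<otimes> m2)"
    "(a \<otimes> m1 \<oplus> c \<otimes> m2) \<otimes> (a \<otimes> m1 \<oplus> c \<otimes> m2) \<oplus> (c \<otimes> m1 \<oplus> \<ominus> a \<otimes> m2) \<otimes> (c \<otimes> m1 \<oplus> \<ominus> a \<otimes> m2)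
      = (a \<otimes> a \<oplus> c \<otimes> c) \<otimes> (m1 \<otimes> m1 \<oplus> m2 \<otimes> m2)"
    using cr by algebra+
  then show ?thesis
    using orth2_cases[of a b c d] assms(1) norm cr
    by (auto simp: \<theta> m dot_def mat2_apply_def mat2_transpose_def)
qed

lemma plane_equations_trivial_solution:
  assumes cr: "u \<in> carrier R" "v \<in> carrier R" "m1 \<in> carrier R" "m2 \<in> carrier R"
    and eq1: "u \<otimes> m1 \<oplus> v \<otimes> m2 = \<zero>" and eq2: "v \<otimes> m1 \<ominus> u \<otimes> m2 = \<zero>"
    and det: "m1 \<otimes> m1 \<oplus> m2 \<otimes> m2 \<noteq> \<zero>"
  shows "u = \<zero> \<and> v = \<zero>"
proof -
  have "u \<otimes> (m1 \<otimes> m1 \<oplus> m2 \<otimes> m2) = m1 \<otimes> (u \<otimes> m1 \<oplus> v \<otimes> m2) \<ominus> m2 \<otimes> (v \<otimes> m1 \<ominus> u \<otimes> m2)"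
    using cr by algebra
  also have "\<dots> = \<zero>" unfolding eq1 eq2 using cr by simp
  finally have u: "u \<otimes> (m1 \<otimes> m1 \<oplus> m2 \<otimes> m2) = \<zero>" .
  have "v \<otimes> (m1 \<otimes> m1 \<oplus> m2 \<otimes> m2) = m2 \<otimes> (u \<otimes> m1 \<oplus> v \<otimes> m2) \<oplus> m1 \<otimes> (v \<otimes> m1 \<ominus> u \<otimes> m2)"
    using cr by algebra
  also have "\<dots> = \<zero>" unfolding eq1 eq2 using cr by simp
  finally have "v \<otimes> (m1 \<otimes> m1 \<oplus> m2 \<otimes> m2) = \<zero>" .
  then show ?thesis using u cr det integral by blast
qed

text \<open>Each of the two kinds of elements of \<open>O(F\<^sub>q\<^sup>2)\<close> (\<open>orth2_cases\<close>) is determined by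
  the image \<open>(a m\<^sub>1 + c m\<^sub>2, b m\<^sub>1 + d m\<^sub>2)\<close> of one anisotropic vector under its transpose.\<close>
lemma orth2_eq_if_same_kind:
  assumes o: "(a, b, c, d) \<in> orth2 R" "(a', b', c', d') \<in> orth2 R"
    and same: "is_rotation (a, b, c, d) = is_rotation (a', b', c', d')"
    and mc: "m1 \<in> carrier R" "m2 \<in> carrier R" and aniso: "m1 \<otimes> m1 \<oplus> m2 \<otimes> m2 \<noteq> \<zero>"
    and eq1: "a \<otimes> m1 \<oplus> c \<otimes> m2 = a' \<otimes> m1 \<oplus> c' \<otimes> m2"
    and eq2: "b \<otimes> m1 \<oplus> d \<otimes> m2 = b' \<otimes> m1 \<oplus> d' \<otimes> m2"
  shows "(a, b, c, d) = (a', b', c', d')"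
proof -
  have cr: "a \<in> carrier R" "b \<in> carrier R" "c \<in> carrier R" "d \<in> carrier R"
    "a' \<in> carrier R" "b' \<in> carrier R" "c' \<in> carrier R" "d' \<in> carrier R"
    using orth2_carrier[OF o(1)] orth2_carrier[OF o(2)] by auto
  have types: "(b = \<ominus> c \<and> d = a) \<and> (b' = \<ominus> c' \<and> d' = a') \<or> (b = c \<and> d = \<ominus> a) \<and> (b' = c' \<and> d' = \<ominus> a')"
    using same orth2_cases[OF o(1)] orth2_cases[OF o(2)] by (auto simp: is_rotation_def)
  then have d2: "(c \<ominus> c') \<otimes> m1 \<ominus> (a \<ominus> a') \<otimes> m2 = \<zero>"
  proof (elim disjE conjE)
    assume "b = \<ominus> c" "d = a" "b' = \<ominus> c'" "d' = a'"
    then have "\<ominus> c \<otimes> m1 \<oplus> a \<otimes> m2 = \<ominus> c' \<otimes> m1 \<oplus> a' \<otimes> m2" using eq2 by simp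
    moreover have "(c \<ominus> c') \<otimes> m1 \<ominus> (a \<ominus> a') \<otimes> m2 = (\<ominus> c' \<otimes> m1 \<oplus> a' \<otimes> m2) \<ominus> (\<ominus> c \<otimes> m1 \<oplus> a \<otimes> m2)"
      using cr mc by algebra
    ultimately show ?thesis using cr mc by (simp add: r_right_minus_eq)
  next
    assume "b = c" "d = \<ominus> a" "b' = c'" "d' = \<ominus> a'"
    then have "c \<otimes> m1 \<oplus> \<ominus> a \<otimes> m2 = c' \<otimes> m1 \<oplus> \<ominus> a' \<otimes> m2" using eq2 by simp
    moreover have "(c \<ominus> c') \<otimes> m1 \<ominus> (a \<ominus> a') \<otimes> m2 = (c \<otimes> m1 \<oplus> \<ominus> a \<otimes> m2) \<ominus> (c' \<otimes> m1 \<oplus> \<ominus> a' \<otimes> m2)"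
      using cr mc by algebra
    ultimately show ?thesis using cr mc by (simp add: r_right_minus_eq)
  qed
  have "(a \<ominus> a') \<otimes> m1 \<oplus> (c \<ominus> c') \<otimes> m2 = (a \<otimes> m1 \<oplus> c \<otimes> m2) \<ominus> (a' \<otimes> m1 \<oplus> c' \<otimes> m2)"
    using cr mc by algebra
  then have d1: "(a \<ominus> a') \<otimes> m1 \<oplus> (c \<ominus> c') \<otimes> m2 = \<zero>"
    using eq1 cr mc by (simp add: r_right_minus_eq)
  have "a \<ominus> a' = \<zero> \<and> c \<ominus> c' = \<zero>"
    using plane_equations_trivial_solution[OF _ _ mc d1 d2 aniso] cr by simp
  then have "a = a'" "c = c'" using cr by (simp_all add: r_right_minus_eq)
  then show ?thesis using types by auto
qed

lemma card_orth2_fiber_le_2: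
  assumes m: "m \<in> carrier R \<times> carrier R" and aniso: "dot R m m \<noteq> \<zero>"
  shows "card {\<theta> \<in> orth2 R. mat2_apply R (mat2_transpose \<theta>) m = m'} \<le> 2"
proof -
  let ?F = "{\<theta> \<in> orth2 R. mat2_apply R (mat2_transpose \<theta>) m = m'}"
  obtain m1 m2 where m_def: "m = (m1, m2)" by (cases m)
  have mc: "m1 \<in> carrier R" "m2 \<in> carrier R" using m m_def by auto
  have "inj_on is_rotation ?F"
  proof (rule inj_onI)
    fix \<theta> \<theta>' assume th: "\<theta> \<in> ?F" and th': "\<theta>' \<in> ?F" and same: "is_rotation \<theta> = is_rotation \<theta>'"
    obtain a b c d where \<theta>: "\<theta> = (a, b, c, d)" by (cases \<theta>) auto
    obtain a' b' c' d' where \<theta>': "\<theta>' = (a', b', c', d')" by (cases \<theta>') auto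
    have "mat2_apply R (mat2_transpose \<theta>) m = mat2_apply R (mat2_transpose \<theta>') m" using th th' by simp
    then have "a \<otimes> m1 \<oplus> c \<otimes> m2 = a' \<otimes> m1 \<oplus> c' \<otimes> m2" "b \<otimes> m1 \<oplus> d \<otimes> m2 = b' \<otimes> m1 \<oplus> d' \<otimes> m2"
      by (simp_all add: \<theta> \<theta>' m_def mat2_apply_def mat2_transpose_def)
    moreover have "(a, b, c, d) \<in> orth2 R" "(a', b', c', d') \<in> orth2 R" using th th' \<theta> \<theta>' by simp_all
    moreover have "m1 \<otimes> m1 \<oplus> m2 \<otimes> m2 \<noteq> \<zero>" using aniso by (simp add: m_def dot_def)
    ultimately show "\<theta> = \<theta>'" using orth2_eq_if_same_kind[OF _ _ _ mc] same \<theta> \<theta>' by simp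
  qed
  then have "card ?F \<le> card (UNIV :: bool set)" by (rule card_inj_on_le) auto
  then show ?thesis by simp
qed

lemma card_circle_le:
  assumes "finite (carrier R)"
  shows "card {m \<in> carrier R \<times> carrier R. dot R m m = t} \<le> 2 * card (carrier R)"
proof (rule card_le_by_fibers[where f = fst])
  let ?C = "{m \<in> carrier R \<times> carrier R. dot R m m = t}"
  fix a assume a: "a \<in> carrier R"
  show "card {m \<in> ?C. fst m = a} \<le> 2"
  proof (cases "{m \<in> ?C. fst m = a} = {}")
    case True
    show ?thesis unfolding True by simp
  next
    case False
    then obtain y0 where y0: "(a, y0) \<in> ?C" by auto
    have "{m \<in> ?C. fst m = a} \<subseteq> {(a, y0), (a, \<ominus> y0)}"
    proof
      fix m assume "m \<in> {m \<in> ?C. fst m = a}"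
      then obtain y where m: "m = (a, y)" "y \<in> carrier R" "a \<otimes> a \<oplus> y \<otimes> y = t" by (auto simp: dot_def)
      have "a \<otimes> a \<oplus> y \<otimes> y = a \<otimes> a \<oplus> y0 \<otimes> y0" using m y0 by (simp add: dot_def)
      then have "y \<otimes> y = y0 \<otimes> y0" using m y0 a by simp
      then show "m \<in> {(a, y0), (a, \<ominus> y0)}" using square_eq_square_iff m y0 by auto
    qed
    then have "card {m \<in> ?C. fst m = a} \<le> card {(a, y0), (a, \<ominus> y0)}" by (rule card_mono[rotated]) simp
    also have "\<dots> \<le> 2" by (simp add: card_insert_le_m1)
    finally show ?thesis .
  qed
qed (use assms in auto)

lemma card_orth2_le:
  assumes "finite (carrier R)"
  shows "card (orth2 R) \<le> 4 * card (carrier R)"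
proof -
  let ?e1 = "(\<one>, \<zero>)" and ?C = "{m \<in> carrier R \<times> carrier R. dot R m m = \<one>}"
  have e1: "?e1 \<in> carrier R \<times> carrier R" "dot R ?e1 ?e1 = \<one>" by (simp_all add: dot_def)
  have "card (orth2 R) \<le> 2 * card ?C"
  proof (rule card_le_by_fibers[where f = "\<lambda>\<theta>. mat2_apply R (mat2_transpose \<theta>) ?e1"])
    show "(\<lambda>\<theta>. mat2_apply R (mat2_transpose \<theta>) ?e1) ` orth2 R \<subseteq> ?C"
    proof (rule image_subsetI)
      fix \<theta> assume "\<theta> \<in> orth2 R"
      then show "mat2_apply R (mat2_transpose \<theta>) ?e1 \<in> ?C"
        using mat2_apply_closed(2)[OF _ e1(1)] dot_self_mat2_transpose_apply[OF _ e1(1)] e1(2) by simp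
    qed
    show "card {\<theta> \<in> orth2 R. mat2_apply R (mat2_transpose \<theta>) ?e1 = m'} \<le> 2" for m'
      using card_orth2_fiber_le_2[OF e1(1)] e1(2) by simp
  qed (use assms finite_orth2 in auto)
  also have "\<dots> \<le> 2 * (2 * card (carrier R))" using card_circle_le[OF assms] by simp
  finally show ?thesis by simp
qed

end

context field
begin

lemma quadratic_roots:
  assumes "\<mu> \<in> carrier R" "k \<in> carrier R" "n \<in> carrier R" "n \<noteq> \<zero>"
    and "\<mu> \<otimes> (k \<oplus> \<mu> \<otimes> n) = \<zero>"
  shows "\<mu> = \<zero> \<or> \<mu> = \<ominus> k \<otimes> inv n"
proof -
  have "\<mu> = \<zero> \<or> k \<oplus> \<mu> \<otimes> n = \<zero>" using assms integral by blast
  moreover have "\<mu> = \<ominus> k \<otimes> inv n" if "k \<oplus> \<mu> \<otimes> n = \<zero>"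
  proof -
    have "\<mu> \<otimes> n \<oplus> k = \<zero>" using that assms by (simp add: a_comm)
    then have "\<ominus> k = \<mu> \<otimes> n" using assms by (intro minus_equality) simp_all
    have "\<mu> = (\<mu> \<otimes> n) \<otimes> inv n" using assms by (simp add: m_assoc field_Units)
    then show ?thesis using \<open>\<ominus> k = \<mu> \<otimes> n\<close> by simp
  qed
  ultimately show ?thesis by blast
qed

text \<open>Two points \<open>(x\<^sub>0, y\<^sub>0)\<close>, \<open>(x, y)\<close> equidistant from \<open>0\<close> and from \<open>z\<close>: the difference of the
  defining equations gives \<open>2 z \<cdot> (x - x\<^sub>0, y - y\<^sub>0) = 0\<close>, so this difference is a multiple of
  \<open>z\<^sup>\<bottom> = (-z\<^sub>2, z\<^sub>1)\<close>.\<close>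
lemma equidistant_points_differ_by_perp:
  assumes cr: "z1 \<in> carrier R" "z2 \<in> carrier R" "x0 \<in> carrier R" "y0 \<in> carrier R"
    "x \<in> carrier R" "y \<in> carrier R"
    and two: "\<one> \<oplus> \<one> \<noteq> \<zero>" and N: "z1 \<otimes> z1 \<oplus> z2 \<otimes> z2 \<noteq> \<zero>"
    and h0: "x0 \<otimes> x0 \<oplus> y0 \<otimes> y0 = t" and h0': "(z1 \<ominus> x0) \<otimes> (z1 \<ominus> x0) \<oplus> (z2 \<ominus> y0) \<otimes> (z2 \<ominus> y0) = t"
    and h: "x \<otimes> x \<oplus> y \<otimes> y = t" and h': "(z1 \<ominus> x) \<otimes> (z1 \<ominus> x) \<oplus> (z2 \<ominus> y) \<otimes> (z2 \<ominus> y) = t"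
  obtains \<mu> where "\<mu> \<in> carrier R" "x = x0 \<oplus> \<mu> \<otimes> \<ominus> z2" "y = y0 \<oplus> \<mu> \<otimes> z1"
proof -
  define n where "n = z1 \<otimes> z1 \<oplus> z2 \<otimes> z2"
  have n: "n \<in> carrier R" "inv n \<in> carrier R" "n \<otimes> inv n = \<one>"
    using cr N by (simp_all add: n_def field_Units)
  have tc: "t \<in> carrier R" using h0[symmetric] cr by simp
  define l where "l = z1 \<otimes> (x \<ominus> x0) \<oplus> z2 \<otimes> (y \<ominus> y0)"
  have "(\<one> \<oplus> \<one>) \<otimes> l = (((z1 \<ominus> x0) \<otimes> (z1 \<ominus> x0) \<oplus> (z2 \<ominus> y0) \<otimes> (z2 \<ominus> y0)) \<ominus> (x0 \<otimes> x0 \<oplus> y0 \<otimes> y0))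
      \<ominus> (((z1 \<ominus> x) \<otimes> (z1 \<ominus> x) \<oplus> (z2 \<ominus> y) \<otimes> (z2 \<ominus> y)) \<ominus> (x \<otimes> x \<oplus> y \<otimes> y))"
    using cr unfolding l_def by algebra
  also have "\<dots> = \<zero>" unfolding h0 h0' h h' using tc by (simp add: a_minus_def r_neg)
  finally have l: "l = \<zero>" using two integral[of "\<one> \<oplus> \<one>" l] cr by (simp add: l_def)
  define w where "w = \<ominus> z2 \<otimes> (x \<ominus> x0) \<oplus> z1 \<otimes> (y \<ominus> y0)"
  define \<mu> where "\<mu> = w \<otimes> inv n"
  have \<mu>: "\<mu> \<in> carrier R" using cr n by (simp add: \<mu>_def w_def)
  have divide: "u = v \<otimes> inv n" if "u \<in> carrier R" "u \<otimes> n = v" for u v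
    using that n by (metis m_assoc r_one)
  have "(x \<ominus> x0) \<otimes> n = z1 \<otimes> l \<oplus> \<ominus> z2 \<otimes> w" "(y \<ominus> y0) \<otimes> n = z2 \<otimes> l \<oplus> z1 \<otimes> w"
    using cr unfolding l_def w_def n_def by algebra+
  then have "x \<ominus> x0 = (\<ominus> z2 \<otimes> w) \<otimes> inv n" "y \<ominus> y0 = (z1 \<otimes> w) \<otimes> inv n"
    using cr divide unfolding l by (simp_all add: w_def)
  then have "x \<ominus> x0 = \<mu> \<otimes> \<ominus> z2" "y \<ominus> y0 = \<mu> \<otimes> z1"
    using cr n unfolding \<mu>_def w_def by (simp_all add: m_ac)
  moreover have "x = x0 \<oplus> (x \<ominus> x0)" "y = y0 \<oplus> (y \<ominus> y0)" using cr by algebra+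
  ultimately have "x = x0 \<oplus> \<mu> \<otimes> \<ominus> z2" "y = y0 \<oplus> \<mu> \<otimes> z1" by simp_all
  then show thesis using \<mu> that by blast
qed

lemma equidistant_points_cases:
  assumes cr: "z1 \<in> carrier R" "z2 \<in> carrier R" "x0 \<in> carrier R" "y0 \<in> carrier R"
    "x \<in> carrier R" "y \<in> carrier R"
    and two: "\<one> \<oplus> \<one> \<noteq> \<zero>" and N: "z1 \<otimes> z1 \<oplus> z2 \<otimes> z2 \<noteq> \<zero>"
    and h0: "x0 \<otimes> x0 \<oplus> y0 \<otimes> y0 = t" and h0': "(z1 \<ominus> x0) \<otimes> (z1 \<ominus> x0) \<oplus> (z2 \<ominus> y0) \<otimes> (z2 \<ominus> y0) = t"
    and h: "x \<otimes> x \<oplus> y \<otimes> y = t" and h': "(z1 \<ominus> x) \<otimes> (z1 \<ominus> x) \<oplus> (z2 \<ominus> y) \<otimes> (z2 \<ominus> y) = t"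
  defines "\<mu>1 \<equiv> \<ominus> ((\<one> \<oplus> \<one>) \<otimes> (x0 \<otimes> \<ominus> z2 \<oplus> y0 \<otimes> z1)) \<otimes> inv (z1 \<otimes> z1 \<oplus> z2 \<otimes> z2)"
  shows "(x, y) = (x0, y0) \<or> (x, y) = (x0 \<oplus> \<mu>1 \<otimes> \<ominus> z2, y0 \<oplus> \<mu>1 \<otimes> z1)"
proof -
  obtain \<mu> where \<mu>: "\<mu> \<in> carrier R" "x = x0 \<oplus> \<mu> \<otimes> \<ominus> z2" "y = y0 \<oplus> \<mu> \<otimes> z1"
    using equidistant_points_differ_by_perp[OF cr two N h0 h0' h h'] .
  define k where "k = (\<one> \<oplus> \<one>) \<otimes> (x0 \<otimes> \<ominus> z2 \<oplus> y0 \<otimes> z1)"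
  have "x \<otimes> x \<oplus> y \<otimes> y = (x0 \<otimes> x0 \<oplus> y0 \<otimes> y0) \<oplus> \<mu> \<otimes> (k \<oplus> \<mu> \<otimes> (z1 \<otimes> z1 \<oplus> z2 \<otimes> z2))"
    unfolding \<mu> k_def using cr \<mu>(1) by algebra
  then have "t = t \<oplus> \<mu> \<otimes> (k \<oplus> \<mu> \<otimes> (z1 \<otimes> z1 \<oplus> z2 \<otimes> z2))" by (simp only: h h0)
  moreover have "t \<in> carrier R" "k \<in> carrier R" using h0 cr by (auto simp: k_def)
  ultimately have "\<mu> \<otimes> (k \<oplus> \<mu> \<otimes> (z1 \<otimes> z1 \<oplus> z2 \<otimes> z2)) = \<zero>" using cr \<mu>(1) by simp
  then have "\<mu> = \<zero> \<or> \<mu> = \<mu>1"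
    using quadratic_roots[OF \<mu>(1) _ _ N] cr by (simp add: \<mu>1_def k_def)
  then show ?thesis using \<mu> cr by auto
qed

end

section \<open>Additive energy of circles and the restriction estimate\<close>

context finite_field
begin

definition sum_pairs :: "('a \<times> 'a) set \<Rightarrow> 'a \<times> 'a \<Rightarrow> (('a \<times> 'a) \<times> ('a \<times> 'a)) set" where
  "sum_pairs S z = {P \<in> S \<times> S. vadd R (fst P) (snd P) = z}"

lemma vadd_eq_imp_eq_vsub:
  assumes "m \<in> F2" "m' \<in> F2" "vadd R m m' = z"
  shows "m' = vsub R z m"
proof -
  obtain a b c d where m: "m = (a, b)" and m': "m' = (c, d)" by (cases m, cases m')
  have "a \<in> carrier R" "b \<in> carrier R" "c \<in> carrier R" "d \<in> carrier R" using assms m m' by auto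
  then have "c = (a \<oplus> c) \<ominus> a" "d = (b \<oplus> d) \<ominus> b" by algebra+
  then show ?thesis using assms(3) m m' by (auto simp: vadd_def vsub_def)
qed

lemma vadd_commute: "m \<in> F2 \<Longrightarrow> m' \<in> F2 \<Longrightarrow> vadd R m m' = vadd R m' m"
  by (auto simp: vadd_def a_comm)

lemma sum_pairsD:
  assumes "S \<subseteq> F2" and "P \<in> sum_pairs S z"
  shows "fst P \<in> F2" "snd P \<in> F2" "vadd R (fst P) (snd P) = z"
proof -
  have "fst P \<in> S" "snd P \<in> S" "vadd R (fst P) (snd P) = z"
    using assms(2) by (simp_all add: sum_pairs_def mem_Times_iff)
  then show "fst P \<in> F2" "snd P \<in> F2" "vadd R (fst P) (snd P) = z" using assms(1) by auto
qed

lemma inj_on_fst_sum_pairs: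
  assumes "S \<subseteq> F2"
  shows "inj_on fst (sum_pairs S z)"
proof (rule inj_onI)
  fix P P' assume P: "P \<in> sum_pairs S z" and P': "P' \<in> sum_pairs S z" and eq: "fst P = fst P'"
  have "snd P = vsub R z (fst P)" "snd P' = vsub R z (fst P')"
    using vadd_eq_imp_eq_vsub[OF sum_pairsD[OF assms P]] vadd_eq_imp_eq_vsub[OF sum_pairsD[OF assms P']] .
  then show "P = P'" using eq by (simp add: prod_eq_iff)
qed

lemma inj_on_snd_sum_pairs:
  assumes "S \<subseteq> F2"
  shows "inj_on snd (sum_pairs S z)"
proof (rule inj_onI)
  fix P P' assume P: "P \<in> sum_pairs S z" and P': "P' \<in> sum_pairs S z" and eq: "snd P = snd P'"
  note p = sum_pairsD[OF assms P] and p' = sum_pairsD[OF assms P']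
  have "fst P = vsub R z (snd P)"
    using vadd_eq_imp_eq_vsub[OF p(2,1)] vadd_commute[OF p(1,2)] p(3) by simp
  moreover have "fst P' = vsub R z (snd P')"
    using vadd_eq_imp_eq_vsub[OF p'(2,1)] vadd_commute[OF p'(1,2)] p'(3) by simp
  ultimately show "P = P'" using eq by (simp add: prod_eq_iff)
qed

lemma sum_sum_pairs:
  assumes "S \<subseteq> F2"
  shows "(\<Sum>z\<in>F2. \<Sum>P\<in>sum_pairs S z. f P) = (\<Sum>P\<in>S \<times> S. f P)"
  unfolding sum_pairs_def
proof (rule sum.group)
  show "finite (S \<times> S)" using assms finite_subset[OF _ finite_F2] by blast
  show "(\<lambda>P. vadd R (fst P) (snd P)) ` (S \<times> S) \<subseteq> F2"
  proof (rule image_subsetI)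
    fix P assume "P \<in> S \<times> S"
    then have "fst P \<in> F2" "snd P \<in> F2" using assms mem_Times_iff by blast+
    then show "vadd R (fst P) (snd P) \<in> F2" by (rule vadd_closed)
  qed
qed (rule finite_F2)

lemma sum_sum_pairs_fst_le:
  fixes g :: "'a \<times> 'a \<Rightarrow> real"
  assumes "S \<subseteq> F2" and "\<And>m. g m \<ge> 0"
  shows "(\<Sum>P\<in>sum_pairs S z. g (fst P)) \<le> (\<Sum>m\<in>S. g m)"
proof -
  have "(\<Sum>P\<in>sum_pairs S z. g (fst P)) = (\<Sum>m\<in>fst ` sum_pairs S z. g m)"
    by (simp add: sum.reindex[OF inj_on_fst_sum_pairs[OF assms(1)]])
  also have "\<dots> \<le> (\<Sum>m\<in>S. g m)"
    using assms finite_subset[OF _ finite_F2] by (intro sum_mono2) (auto simp: sum_pairs_def)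
  finally show ?thesis .
qed

lemma sum_sum_pairs_snd_le:
  fixes g :: "'a \<times> 'a \<Rightarrow> real"
  assumes "S \<subseteq> F2" and "\<And>m. g m \<ge> 0"
  shows "(\<Sum>P\<in>sum_pairs S z. g (snd P)) \<le> (\<Sum>m\<in>S. g m)"
proof -
  have "(\<Sum>P\<in>sum_pairs S z. g (snd P)) = (\<Sum>m\<in>snd ` sum_pairs S z. g m)"
    by (simp add: sum.reindex[OF inj_on_snd_sum_pairs[OF assms(1)]])
  also have "\<dots> \<le> (\<Sum>m\<in>S. g m)"
    using assms finite_subset[OF _ finite_F2] by (intro sum_mono2) (auto simp: sum_pairs_def)
  finally show ?thesis .
qed

lemma norm_sum_pairs_le:
  fixes g :: "'a \<times> 'a \<Rightarrow> complex"
  assumes "S \<subseteq> F2"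
  shows "cmod (\<Sum>P\<in>sum_pairs S z. g (fst P) * g (snd P)) \<le> (\<Sum>m\<in>S. (cmod (g m))\<^sup>2)"
proof -
  have "cmod (\<Sum>P\<in>sum_pairs S z. g (fst P) * g (snd P)) \<le> (\<Sum>P\<in>sum_pairs S z. cmod (g (fst P)) * cmod (g (snd P)))"
    by (rule order.trans[OF norm_sum]) (simp add: norm_mult)
  also have "\<dots> \<le> (\<Sum>P\<in>sum_pairs S z. ((cmod (g (fst P)))\<^sup>2 + (cmod (g (snd P)))\<^sup>2) / 2)"
  proof (rule sum_mono)
    fix P
    have "0 \<le> (cmod (g (fst P)) - cmod (g (snd P)))\<^sup>2" by simp
    then show "cmod (g (fst P)) * cmod (g (snd P)) \<le> ((cmod (g (fst P)))\<^sup>2 + (cmod (g (snd P)))\<^sup>2) / 2"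
      by (simp add: power2_diff field_simps)
  qed
  also have "\<dots> = ((\<Sum>P\<in>sum_pairs S z. (cmod (g (fst P)))\<^sup>2) + (\<Sum>P\<in>sum_pairs S z. (cmod (g (snd P)))\<^sup>2)) / 2"
    by (simp only: sum.distrib[symmetric] sum_divide_distrib[symmetric])
  also have "\<dots> \<le> (\<Sum>m\<in>S. (cmod (g m))\<^sup>2)"
    using sum_sum_pairs_fst_le[OF assms, of "\<lambda>m. (cmod (g m))\<^sup>2" z]
      sum_sum_pairs_snd_le[OF assms, of "\<lambda>m. (cmod (g m))\<^sup>2" z] by simp
  finally show ?thesis .
qed

end

context finite_field_3_mod_4
begin

lemma dot_self_eq_zero_iff:
  assumes "m \<in> F2"
  shows "dot R m m = \<zero> \<longleftrightarrow> m = (\<zero>, \<zero>)"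
  using assms sum_squares_eq_zero_iff by (cases m) (auto simp: dot_def)

lemma card_circle_inter_circle_le_2:
  assumes z: "z \<in> F2" "z \<noteq> (\<zero>, \<zero>)"
  shows "card {m \<in> F2. dot R m m = t \<and> dot R (vsub R z m) (vsub R z m) = t} \<le> 2"
proof (cases "{m \<in> F2. dot R m m = t \<and> dot R (vsub R z m) (vsub R z m) = t} = {}")
  case True
  show ?thesis unfolding True by simp
next
  case False
  let ?X = "{m \<in> F2. dot R m m = t \<and> dot R (vsub R z m) (vsub R z m) = t}"
  obtain x0 y0 where m0: "(x0, y0) \<in> ?X" using False by auto
  obtain z1 z2 where zz: "z = (z1, z2)" by (cases z)
  have "odd q" using card_mod_4 by presburger
  then have two: "\<one> \<oplus> \<one> \<noteq> \<zero>" by (rule one_plus_one_neq_zero)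
  have n: "z1 \<otimes> z1 \<oplus> z2 \<otimes> z2 \<noteq> \<zero>" using dot_self_eq_zero_iff[OF z(1)] z(2) by (simp add: zz dot_def)
  have cr: "z1 \<in> carrier R" "z2 \<in> carrier R" "x0 \<in> carrier R" "y0 \<in> carrier R"
    using z m0 zz by auto
  define \<mu>1 where "\<mu>1 = \<ominus> ((\<one> \<oplus> \<one>) \<otimes> (x0 \<otimes> \<ominus> z2 \<oplus> y0 \<otimes> z1)) \<otimes> inv (z1 \<otimes> z1 \<oplus> z2 \<otimes> z2)"
  have "?X \<subseteq> {(x0, y0), (x0 \<oplus> \<mu>1 \<otimes> \<ominus> z2, y0 \<oplus> \<mu>1 \<otimes> z1)}"
  proof
    fix m assume m: "m \<in> ?X"
    obtain x y where xy: "m = (x, y)" by (cases m)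
    show "m \<in> {(x0, y0), (x0 \<oplus> \<mu>1 \<otimes> \<ominus> z2, y0 \<oplus> \<mu>1 \<otimes> z1)}"
      using equidistant_points_cases[OF cr _ _ two n, of x y t] m m0
      by (auto simp: xy zz dot_def vsub_def \<mu>1_def)
  qed
  then have "card ?X \<le> card {(x0, y0), (x0 \<oplus> \<mu>1 \<otimes> \<ominus> z2, y0 \<oplus> \<mu>1 \<otimes> z1)}"
    by (rule card_mono[rotated]) simp
  also have "\<dots> \<le> 2" by (simp add: card_insert_le_m1)
  finally show ?thesis .
qed

lemma card_sum_pairs_circle_le_2:
  assumes S: "S = {m \<in> F2. dot R m m = t}" and z: "z \<in> F2" "z \<noteq> (\<zero>, \<zero>)"
  shows "card (sum_pairs S z) \<le> 2"
proof -
  let ?X = "{m \<in> F2. dot R m m = t \<and> dot R (vsub R z m) (vsub R z m) = t}"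
  have SF: "S \<subseteq> F2" using S by auto
  have "fst ` sum_pairs S z \<subseteq> ?X"
  proof (rule image_subsetI)
    fix P assume P: "P \<in> sum_pairs S z"
    have "snd P = vsub R z (fst P)" by (rule vadd_eq_imp_eq_vsub[OF sum_pairsD[OF SF P]])
    moreover have "fst P \<in> S" "snd P \<in> S" using P by (simp_all add: sum_pairs_def mem_Times_iff)
    ultimately show "fst P \<in> ?X" using S by simp
  qed
  then have "card (fst ` sum_pairs S z) \<le> card ?X" by (rule card_mono[rotated]) (simp add: finite_F2)
  then show ?thesis
    using card_image[OF inj_on_fst_sum_pairs[OF SF, of z]] card_circle_inter_circle_le_2[OF z, of t]
    by linarith
qed

text \<open>The term \<open>z = 0\<close> is bounded by \<open>norm_sum_pairs_le\<close>; for \<open>z \<noteq> 0\<close> there are at most two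
  representations \<open>z = m + m'\<close> on a circle, so Cauchy-Schwarz loses only a factor \<open>2\<close>.\<close>
lemma circle_energy_le:
  fixes g :: "'a \<times> 'a \<Rightarrow> complex"
  assumes S: "S = {m \<in> F2. dot R m m = t}"
  shows "(\<Sum>z\<in>F2. (cmod (\<Sum>P\<in>sum_pairs S z. g (fst P) * g (snd P)))\<^sup>2)
    \<le> 3 * (\<Sum>m\<in>S. (cmod (g m))\<^sup>2)\<^sup>2"
proof -
  define T where "T = (\<Sum>m\<in>S. (cmod (g m))\<^sup>2)"
  define h where "h P = cmod (g (fst P)) * cmod (g (snd P))" for P :: "('a \<times> 'a) \<times> ('a \<times> 'a)"
  define c where "c z = (\<Sum>P\<in>sum_pairs S z. g (fst P) * g (snd P))" for z
  have SF: "S \<subseteq> F2" using S by auto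
  have zero: "(cmod (c (\<zero>, \<zero>)))\<^sup>2 \<le> T\<^sup>2"
    using norm_sum_pairs_le[OF SF, of g] unfolding c_def T_def by (intro power_mono) simp_all
  have nonzero: "(cmod (c z))\<^sup>2 \<le> 2 * (\<Sum>P\<in>sum_pairs S z. (h P)\<^sup>2)" if z: "z \<in> F2 - {(\<zero>, \<zero>)}" for z
  proof -
    have "(cmod (c z))\<^sup>2 \<le> (\<Sum>P\<in>sum_pairs S z. h P)\<^sup>2"
      unfolding c_def h_def by (intro power_mono order.trans[OF norm_sum]) (simp_all add: norm_mult)
    also have "\<dots> \<le> (\<Sum>P\<in>sum_pairs S z. (h P)\<^sup>2) * card (sum_pairs S z)"
      by (rule sum_squared_le_sum_of_squares)
    also have "\<dots> \<le> (\<Sum>P\<in>sum_pairs S z. (h P)\<^sup>2) * 2"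
      using card_sum_pairs_circle_le_2[OF S] z by (intro mult_left_mono) (simp_all add: sum_nonneg)
    finally show ?thesis by simp
  qed
  have total: "(\<Sum>z\<in>F2. \<Sum>P\<in>sum_pairs S z. (h P)\<^sup>2) = T\<^sup>2"
  proof -
    have "(\<Sum>z\<in>F2. \<Sum>P\<in>sum_pairs S z. (h P)\<^sup>2) = (\<Sum>P\<in>S \<times> S. (h P)\<^sup>2)"
      by (rule sum_sum_pairs[OF SF])
    also have "\<dots> = (\<Sum>m\<in>S. \<Sum>m'\<in>S. (cmod (g m))\<^sup>2 * (cmod (g m'))\<^sup>2)"
      unfolding h_def power_mult_distrib by (subst sum.cartesian_product) (simp add: case_prod_beta)
    also have "\<dots> = T\<^sup>2" unfolding T_def power2_eq_square[of "sum _ _"] by (rule sum_product[symmetric])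
    finally show ?thesis .
  qed
  have "(\<Sum>z\<in>F2. (cmod (c z))\<^sup>2) = (cmod (c (\<zero>, \<zero>)))\<^sup>2 + (\<Sum>z\<in>F2 - {(\<zero>, \<zero>)}. (cmod (c z))\<^sup>2)"
    by (rule sum.remove[OF finite_F2]) simp
  also have "\<dots> \<le> T\<^sup>2 + (\<Sum>z\<in>F2 - {(\<zero>, \<zero>)}. 2 * (\<Sum>P\<in>sum_pairs S z. (h P)\<^sup>2))"
    using zero nonzero by (intro add_mono sum_mono) auto
  also have "\<dots> \<le> T\<^sup>2 + (\<Sum>z\<in>F2. 2 * (\<Sum>P\<in>sum_pairs S z. (h P)\<^sup>2))"
    by (intro add_left_mono sum_mono2[OF finite_F2]) (simp_all add: sum_nonneg)
  also have "\<dots> = 3 * T\<^sup>2" using total by (simp add: sum_distrib_left[symmetric])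
  finally show ?thesis by (simp add: c_def T_def)
qed

end

context additive_character
begin

lemma square_expansion:
  fixes g :: "'a \<times> 'a \<Rightarrow> complex"
  assumes S: "S \<subseteq> F2" and x: "x \<in> F2"
  shows "(\<Sum>m\<in>S. g m * e m x)\<^sup>2 = (\<Sum>z\<in>F2. (\<Sum>P\<in>sum_pairs S z. g (fst P) * g (snd P)) * e z x)"
proof -
  have "(\<Sum>m\<in>S. g m * e m x)\<^sup>2 = (\<Sum>m\<in>S. \<Sum>m'\<in>S. g m * g m' * (e m x * e m' x))"
    by (simp add: power2_eq_square sum_product algebra_simps)
  also have "\<dots> = (\<Sum>m\<in>S. \<Sum>m'\<in>S. g m * g m' * e (vadd R m m') x)"
    using S x by (intro sum.cong refl) (simp add: e_vadd subsetD)
  also have "\<dots> = (\<Sum>P\<in>S \<times> S. g (fst P) * g (snd P) * e (vadd R (fst P) (snd P)) x)"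
    by (simp add: sum.cartesian_product case_prod_beta)
  also have "\<dots> = (\<Sum>z\<in>F2. \<Sum>P\<in>sum_pairs S z. g (fst P) * g (snd P) * e (vadd R (fst P) (snd P)) x)"
    by (rule sum_sum_pairs[OF S, symmetric])
  also have "\<dots> = (\<Sum>z\<in>F2. \<Sum>P\<in>sum_pairs S z. g (fst P) * g (snd P) * e z x)"
    by (intro sum.cong refl) (simp add: sum_pairs_def)
  finally show ?thesis by (simp add: sum_distrib_right)
qed

end

locale character_3_mod_4 = finite_field_3_mod_4 + additive_character
begin

lemma circle_fourth_moment:
  fixes g :: "'a \<times> 'a \<Rightarrow> complex"
  assumes S: "S = {m \<in> F2. dot R m m = t}"
  shows "(\<Sum>x\<in>F2. ((cmod (\<Sum>m\<in>S. g m * e m x))\<^sup>2)\<^sup>2) \<le> 3 * real q ^ 2 * (\<Sum>m\<in>S. (cmod (g m))\<^sup>2)\<^sup>2"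
proof -
  define c where "c z = (\<Sum>P\<in>sum_pairs S z. g (fst P) * g (snd P))" for z
  have "(\<Sum>x\<in>F2. ((cmod (\<Sum>m\<in>S. g m * e m x))\<^sup>2)\<^sup>2) = (\<Sum>x\<in>F2. (cmod (\<Sum>z\<in>F2. c z * e z x))\<^sup>2)"
    using S by (intro sum.cong refl) (auto simp: c_def norm_power simp flip: square_expansion)
  also have "\<dots> = real q ^ 2 * (\<Sum>z\<in>F2. (cmod (c z))\<^sup>2)" by (rule plancherel)
  also have "\<dots> \<le> real q ^ 2 * (3 * (\<Sum>m\<in>S. (cmod (g m))\<^sup>2)\<^sup>2)"
    unfolding c_def by (intro mult_left_mono circle_energy_le[OF S]) simp
  finally show ?thesis by simp
qed

lemma sum_circle_fourier_eq:
  assumes E: "E \<subseteq> F2" and S: "S \<subseteq> F2"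
  shows "(\<Sum>x\<in>E. \<Sum>m\<in>S. cnj (fourier E m) * e m x) = complex_of_real (\<Sum>m\<in>S. (cmod (fourier E m))\<^sup>2)"
proof -
  have "(\<Sum>x\<in>E. \<Sum>m\<in>S. cnj (fourier E m) * e m x) = (\<Sum>m\<in>S. cnj (fourier E m) * fourier E m)"
    by (subst sum.swap) (simp add: fourier_def sum_distrib_left)
  also have "\<dots> = (\<Sum>m\<in>S. fourier E m * cnj (fourier E m))"
    by (simp add: mult.commute)
  also have "\<dots> = complex_of_real (\<Sum>m\<in>S. (cmod (fourier E m))\<^sup>2)"
    by (simp only: of_real_sum complex_norm_square)
  finally show ?thesis .
qed

text \<open>The sum \<open>r\<close> of \<open>|fourier E|\<^sup>2\<close> over the circle is \<open>\<Sum>x\<in>E. G x\<close>, where \<open>G\<close> is the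
  transform of \<open>cnj \<circ> fourier E\<close> restricted to the circle; Cauchy-Schwarz twice gives
  \<open>r\<^sup>4 \<le> |E|\<^sup>3 \<Sum>x. |G x|\<^sup>4\<close>, and the fourth moment of \<open>G\<close> is at most \<open>3 q\<^sup>2 r\<^sup>2\<close>.\<close>
lemma restriction_estimate:
  assumes E: "E \<subseteq> F2" and S: "S = {m \<in> F2. dot R m m = t}"
  shows "(\<Sum>m\<in>S. (cmod (fourier E m))\<^sup>2)\<^sup>2 \<le> 3 * real q ^ 2 * real (card E) ^ 3"
proof -
  define G where "G x = (\<Sum>m\<in>S. cnj (fourier E m) * e m x)" for x
  define r where "r = (\<Sum>m\<in>S. (cmod (fourier E m))\<^sup>2)"
  define N where "N = real (card E)"
  have r: "r \<ge> 0" by (simp add: r_def sum_nonneg)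
  have "(\<Sum>x\<in>E. G x) = complex_of_real r"
    unfolding G_def r_def by (rule sum_circle_fourier_eq[OF E]) (use S in blast)
  then have "r = cmod (\<Sum>x\<in>E. G x)" using r by simp
  also have "\<dots> \<le> (\<Sum>x\<in>E. cmod (G x))" by (rule norm_sum)
  finally have "r\<^sup>2 \<le> (\<Sum>x\<in>E. cmod (G x))\<^sup>2" using r by (intro power_mono) auto
  also have "\<dots> \<le> N * (\<Sum>x\<in>E. (cmod (G x))\<^sup>2)"
    using sum_squared_le_sum_of_squares[of "\<lambda>x. cmod (G x)" E] by (simp add: N_def mult.commute)
  finally have "r\<^sup>2 \<le> N * (\<Sum>x\<in>E. (cmod (G x))\<^sup>2)" .
  then have first: "(r\<^sup>2)\<^sup>2 \<le> N\<^sup>2 * (\<Sum>x\<in>E. (cmod (G x))\<^sup>2)\<^sup>2"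
    using r by (metis power_mono power_mult_distrib zero_le_power2)
  have "(\<Sum>x\<in>E. (cmod (G x))\<^sup>2)\<^sup>2 \<le> N * (\<Sum>x\<in>E. ((cmod (G x))\<^sup>2)\<^sup>2)"
    using sum_squared_le_sum_of_squares[of "\<lambda>x. (cmod (G x))\<^sup>2" E] by (simp add: N_def mult.commute)
  also have "(\<Sum>x\<in>E. ((cmod (G x))\<^sup>2)\<^sup>2) \<le> (\<Sum>x\<in>F2. ((cmod (G x))\<^sup>2)\<^sup>2)"
    using E by (intro sum_mono2 finite_F2) auto
  also have "\<dots> \<le> 3 * real q ^ 2 * r\<^sup>2"
    using circle_fourth_moment[OF S, of "\<lambda>m. cnj (fourier E m)"] by (simp add: G_def r_def)
  finally have "(\<Sum>x\<in>E. (cmod (G x))\<^sup>2)\<^sup>2 \<le> N * (3 * real q ^ 2 * r\<^sup>2)"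
    by (simp add: N_def mult_left_mono)
  then have "(r\<^sup>2)\<^sup>2 \<le> N\<^sup>2 * (N * (3 * real q ^ 2 * r\<^sup>2))"
    using first by (meson mult_left_mono order_trans zero_le_power2)
  then have key: "r\<^sup>2 * r\<^sup>2 \<le> (3 * real q ^ 2 * N ^ 3) * r\<^sup>2"
    by (simp add: power2_eq_square power3_eq_cube algebra_simps)
  then have "r\<^sup>2 \<le> 3 * real q ^ 2 * N ^ 3"
  proof (cases "r = 0")
    case False
    then have "0 < r\<^sup>2" by simp
    then show ?thesis by (rule mult_right_le_imp_le[OF key])
  qed (simp add: N_def)
  then show ?thesis by (simp add: r_def N_def)
qed

end

section \<open>The second moment of \<open>lam\<close>\<close>

context additive_character
begin

definition twisted_diff :: "'a mat2 \<Rightarrow> ('a \<times> 'a) \<times> ('a \<times> 'a) \<Rightarrow> 'a \<times> 'a" where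
  "twisted_diff \<theta> P = vsub R (fst P) (mat2_apply R \<theta> (snd P))"

lemma twisted_diff_closed:
  assumes "\<theta> \<in> orth2 R" and "E \<subseteq> F2" and "P \<in> E \<times> E"
  shows "twisted_diff \<theta> P \<in> F2"
proof -
  have "fst P \<in> F2" "snd P \<in> F2" using assms(2,3) mem_Times_iff by blast+
  then show ?thesis unfolding twisted_diff_def using assms(1) by (intro vsub_closed mat2_apply_closed)
qed

lemma lam_eq_sum:
  assumes "E \<subseteq> F2"
  shows "real (lam R E \<theta> w) = (\<Sum>P\<in>E \<times> E. if twisted_diff \<theta> P = w then 1 else 0)"
proof -
  have "{(u, v) \<in> E \<times> E. vsub R u (mat2_apply R \<theta> v) = w} = {P \<in> E \<times> E. twisted_diff \<theta> P = w}"
    by (auto simp: twisted_diff_def)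
  then have "real (lam R E \<theta> w) = (\<Sum>P\<in>{P \<in> E \<times> E. twisted_diff \<theta> P = w}. 1)" by (simp add: lam_def)
  also have "\<dots> = (\<Sum>P\<in>E \<times> E. if twisted_diff \<theta> P = w then 1 else 0)"
    using finite_subset[OF assms finite_F2] by (intro sum.inter_filter) simp
  finally show ?thesis .
qed

lemma sum_lam:
  assumes "E \<subseteq> F2" and "\<theta> \<in> orth2 R"
  shows "(\<Sum>w\<in>F2. real (lam R E \<theta> w)) = real (card E) ^ 2"
proof -
  have "(\<Sum>w\<in>F2. real (lam R E \<theta> w)) = (\<Sum>P\<in>E \<times> E. \<Sum>w\<in>F2. if twisted_diff \<theta> P = w then 1 else 0)"
    using lam_eq_sum[OF assms(1)] by (simp add: sum.swap[of _ F2])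
  also have "\<dots> = (\<Sum>P\<in>E \<times> E. 1)"
    using twisted_diff_closed[OF assms(2,1)] by (intro sum.cong refl) (simp add: sum.delta'[OF finite_F2])
  finally show ?thesis by (simp add: card_cartesian_product power2_eq_square)
qed

lemma fourier_lam:
  assumes E: "E \<subseteq> F2" and \<theta>: "\<theta> \<in> orth2 R" and m: "m \<in> F2"
  shows "(\<Sum>w\<in>F2. of_nat (lam R E \<theta> w) * e w m)
    = fourier E m * cnj (fourier E (mat2_apply R (mat2_transpose \<theta>) m))"
proof -
  have "(of_nat (lam R E \<theta> w) :: complex) = (\<Sum>P\<in>E \<times> E. if twisted_diff \<theta> P = w then 1 else 0)" for w
    using arg_cong[OF lam_eq_sum[OF E, of \<theta> w], of complex_of_real]
    by (simp add: of_real_sum if_distrib cong: if_cong)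
  then have "(\<Sum>w\<in>F2. of_nat (lam R E \<theta> w) * e w m)
      = (\<Sum>w\<in>F2. \<Sum>P\<in>E \<times> E. (if twisted_diff \<theta> P = w then 1 else 0) * e w m)"
    by (simp add: sum_distrib_right)
  also have "\<dots> = (\<Sum>w\<in>F2. \<Sum>P\<in>E \<times> E. if twisted_diff \<theta> P = w then e w m else 0)"
    by (intro sum.cong refl) simp
  also have "\<dots> = (\<Sum>P\<in>E \<times> E. e (twisted_diff \<theta> P) m)"
    using twisted_diff_closed[OF \<theta> E] by (subst sum.swap) (simp add: sum.delta'[OF finite_F2])
  also have "\<dots> = (\<Sum>P\<in>E \<times> E. e m (fst P) * cnj (e (mat2_apply R (mat2_transpose \<theta>) m) (snd P)))"
  proof (intro sum.cong refl)
    fix P assume "P \<in> E \<times> E"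
    then have u: "fst P \<in> F2" and v: "snd P \<in> F2" using E mem_Times_iff by blast+
    have \<theta>v: "mat2_apply R \<theta> (snd P) \<in> F2" by (rule mat2_apply_closed(1)[OF \<theta> v])
    have "e (mat2_apply R \<theta> (snd P)) m = e (mat2_apply R (mat2_transpose \<theta>) m) (snd P)"
      using e_commute[OF \<theta>v m] dot_mat2_apply[OF \<theta> m v] by (simp add: e_def)
    then show "e (twisted_diff \<theta> P) m = e m (fst P) * cnj (e (mat2_apply R (mat2_transpose \<theta>) m) (snd P))"
      unfolding twisted_diff_def using e_vsub[OF u \<theta>v m] e_commute[OF u m] by simp
  qed
  also have "\<dots> = fourier E m * cnj (fourier E (mat2_apply R (mat2_transpose \<theta>) m))"
    by (simp add: fourier_def sum_product sum.cartesian_product case_prod_beta)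
  finally show ?thesis .
qed

lemma sum_lam_squared:
  assumes E: "E \<subseteq> F2" and \<theta>: "\<theta> \<in> orth2 R"
  shows "real q ^ 2 * (\<Sum>w\<in>F2. (real (lam R E \<theta> w))\<^sup>2)
    = (\<Sum>m\<in>F2. (cmod (fourier E m))\<^sup>2 * (cmod (fourier E (mat2_apply R (mat2_transpose \<theta>) m)))\<^sup>2)"
proof -
  have "real q ^ 2 * (\<Sum>w\<in>F2. (real (lam R E \<theta> w))\<^sup>2)
      = (\<Sum>m\<in>F2. (cmod (\<Sum>w\<in>F2. of_nat (lam R E \<theta> w) * e w m))\<^sup>2)"
    using plancherel[of "\<lambda>w. of_nat (lam R E \<theta> w)"] by simp
  also have "\<dots> = (\<Sum>m\<in>F2. (cmod (fourier E m))\<^sup>2 * (cmod (fourier E (mat2_apply R (mat2_transpose \<theta>) m)))\<^sup>2)"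
    using fourier_lam[OF E \<theta>] by (intro sum.cong refl) (simp add: norm_mult power_mult_distrib)
  finally show ?thesis .
qed

lemma sum_lam_deviation_squared:
  assumes E: "E \<subseteq> F2" and \<theta>: "\<theta> \<in> orth2 R"
  shows "(\<Sum>w\<in>F2. (real (lam R E \<theta> w) - real (card E) ^ 2 / real q ^ 2)\<^sup>2)
    = (\<Sum>w\<in>F2. (real (lam R E \<theta> w))\<^sup>2) - real (card E) ^ 4 / real q ^ 2"
proof -
  define c where "c = real (card E) ^ 2 / real q ^ 2"
  have "(\<Sum>w\<in>F2. (real (lam R E \<theta> w) - c)\<^sup>2)
      = (\<Sum>w\<in>F2. (real (lam R E \<theta> w))\<^sup>2 - 2 * c * real (lam R E \<theta> w) + c\<^sup>2)"
    by (intro sum.cong refl) (simp add: power2_diff)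
  also have "\<dots> = (\<Sum>w\<in>F2. (real (lam R E \<theta> w))\<^sup>2) - 2 * c * (\<Sum>w\<in>F2. real (lam R E \<theta> w))
      + real (card F2) * c\<^sup>2"
    by (simp add: sum.distrib sum_subtractf sum_distrib_left)
  also have "\<dots> = (\<Sum>w\<in>F2. (real (lam R E \<theta> w))\<^sup>2) - real (card E) ^ 4 / real q ^ 2"
    using sum_lam[OF E \<theta>] card_F2 q_pos unfolding c_def
    by (simp add: field_simps power2_eq_square power4_eq_xxxx)
  finally show ?thesis unfolding c_def .
qed

text \<open>The mean \<open>|E|\<^sup>2 / q\<^sup>2\<close> of \<open>lam\<close> accounts exactly for the frequency \<open>m = 0\<close>.\<close>
lemma sum_lam_deviation_squared_fourier:
  assumes E: "E \<subseteq> F2" and \<theta>: "\<theta> \<in> orth2 R"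
  shows "(\<Sum>w\<in>F2. (real (lam R E \<theta> w) - real (card E) ^ 2 / real q ^ 2)\<^sup>2)
    = (\<Sum>m\<in>F2 - {(\<zero>, \<zero>)}. (cmod (fourier E m))\<^sup>2 * (cmod (fourier E (mat2_apply R (mat2_transpose \<theta>) m)))\<^sup>2)
      / real q ^ 2"
proof -
  let ?f = "\<lambda>m. (cmod (fourier E m))\<^sup>2 * (cmod (fourier E (mat2_apply R (mat2_transpose \<theta>) m)))\<^sup>2"
  have "?f (\<zero>, \<zero>) = real (card E) ^ 4"
    using fourier_zero[OF E] mat2_transpose_apply_zero[OF \<theta>] by (simp add: power4_eq_xxxx power2_eq_square)
  moreover have "(\<Sum>m\<in>F2. ?f m) = ?f (\<zero>, \<zero>) + (\<Sum>m\<in>F2 - {(\<zero>, \<zero>)}. ?f m)"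
    by (rule sum.remove[OF finite_F2]) simp
  ultimately have "real q ^ 2 * (\<Sum>w\<in>F2. (real (lam R E \<theta> w))\<^sup>2) = real (card E) ^ 4 + (\<Sum>m\<in>F2 - {(\<zero>, \<zero>)}. ?f m)"
    unfolding sum_lam_squared[OF E \<theta>] by simp
  then show ?thesis
    using sum_lam_deviation_squared[OF E \<theta>] q_pos by (simp add: field_simps)
qed

end

context character_3_mod_4
begin

text \<open>As \<open>\<theta>\<close> ranges over \<open>O(F\<^sub>q\<^sup>2)\<close>, \<open>\<theta>\<^sup>T m\<close> covers the circle through \<open>m\<close> at most twice.\<close>
lemma sum_orth2_fourier_le:
  assumes E: "E \<subseteq> F2" and m: "m \<in> F2" "m \<noteq> (\<zero>, \<zero>)"
  shows "(\<Sum>\<theta>\<in>orth2 R. (cmod (fourier E (mat2_apply R (mat2_transpose \<theta>) m)))\<^sup>2)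
    \<le> 2 * sqrt 3 * real q * sqrt (real (card E) ^ 3)"
proof -
  let ?S = "{m' \<in> F2. dot R m' m' = dot R m m}"
  have "(\<Sum>\<theta>\<in>orth2 R. (cmod (fourier E (mat2_apply R (mat2_transpose \<theta>) m)))\<^sup>2)
      \<le> real 2 * (\<Sum>m'\<in>?S. (cmod (fourier E m'))\<^sup>2)"
  proof (rule sum_comp_le_by_fibers[OF finite_orth2[OF finite_carrier]])
    show "(\<lambda>\<theta>. mat2_apply R (mat2_transpose \<theta>) m) ` orth2 R \<subseteq> ?S"
    proof (rule image_subsetI)
      fix \<theta> assume "\<theta> \<in> orth2 R"
      then show "mat2_apply R (mat2_transpose \<theta>) m \<in> ?S"
        using mat2_apply_closed(2)[OF _ m(1)] dot_self_mat2_transpose_apply[OF _ m(1)] by simp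
    qed
    show "card {\<theta> \<in> orth2 R. mat2_apply R (mat2_transpose \<theta>) m = m'} \<le> 2" for m'
      using card_orth2_fiber_le_2[OF m(1)] dot_self_eq_zero_iff[OF m(1)] m(2) by simp
  qed (simp_all add: finite_F2)
  also have "(\<Sum>m'\<in>?S. (cmod (fourier E m'))\<^sup>2) \<le> sqrt (3 * real q ^ 2 * real (card E) ^ 3)"
    by (rule real_le_rsqrt[OF restriction_estimate[OF E refl]])
  also have "\<dots> = sqrt 3 * real q * sqrt (real (card E) ^ 3)" by (simp add: real_sqrt_mult)
  finally show ?thesis by simp
qed

lemma sum_orth2_lam_deviation_squared_le:
  assumes E: "E \<subseteq> F2"
  shows "(\<Sum>\<theta>\<in>orth2 R. \<Sum>w\<in>F2. (real (lam R E \<theta> w) - real (card E) ^ 2 / real q ^ 2)\<^sup>2)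
    \<le> 4 * (real q * real (card E) powr (5/2))"
proof -
  define N where "N = real (card E)"
  define a where "a m = (cmod (fourier E m))\<^sup>2" for m
  define b where "b = 2 * sqrt 3 * real q * sqrt (N ^ 3)"
  have b: "b \<ge> 0" by (simp add: b_def N_def)
  have "(\<Sum>\<theta>\<in>orth2 R. \<Sum>w\<in>F2. (real (lam R E \<theta> w) - N ^ 2 / real q ^ 2)\<^sup>2)
      = (\<Sum>m\<in>F2 - {(\<zero>, \<zero>)}. a m * (\<Sum>\<theta>\<in>orth2 R. (cmod (fourier E (mat2_apply R (mat2_transpose \<theta>) m)))\<^sup>2))
        / real q ^ 2"
    by (simp add: sum_lam_deviation_squared_fourier[OF E] N_def a_def sum_divide_distrib[symmetric]
        sum_distrib_left sum.swap[of _ "orth2 R"])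
  also have "\<dots> \<le> (\<Sum>m\<in>F2 - {(\<zero>, \<zero>)}. a m * b) / real q ^ 2"
    using sum_orth2_fourier_le[OF E] unfolding b_def N_def
    by (intro divide_right_mono sum_mono mult_left_mono) (auto simp: a_def)
  also have "\<dots> = (\<Sum>m\<in>F2 - {(\<zero>, \<zero>)}. a m) * b / real q ^ 2"
    by (simp add: sum_distrib_right)
  also have "\<dots> \<le> (\<Sum>m\<in>F2. a m) * b / real q ^ 2"
    using b by (intro divide_right_mono mult_right_mono sum_mono2 finite_F2) (auto simp: a_def)
  also have "\<dots> = 2 * sqrt 3 * real q * (N * sqrt (N ^ 3))"
    using q_pos plancherel_fourier[OF E] by (simp add: a_def b_def N_def field_simps)
  also have "\<dots> = (2 * sqrt 3) * (real q * N powr (5/2))"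
    using mult_sqrt_cube_eq_powr[of N] by (simp add: N_def)
  also have "\<dots> \<le> 4 * (real q * N powr (5/2))"
  proof -
    have "sqrt 3 \<le> (2::real)" by (rule real_le_lsqrt) simp_all
    then show ?thesis by (intro mult_right_mono) simp_all
  qed
  finally show ?thesis by (simp add: N_def)
qed

lemma sum_orth2_lam_squared_le:
  assumes E: "E \<subseteq> F2"
  shows "(\<Sum>\<theta>\<in>orth2 R. \<Sum>w\<in>F2. (real (lam R E \<theta> w))\<^sup>2)
    \<le> 4 * (real q * real (card E) powr (5/2) + real (card E) ^ 4 / real q)"
proof -
  have "(\<Sum>\<theta>\<in>orth2 R. \<Sum>w\<in>F2. (real (lam R E \<theta> w))\<^sup>2)
      = (\<Sum>\<theta>\<in>orth2 R. (\<Sum>w\<in>F2. (real (lam R E \<theta> w) - real (card E) ^ 2 / real q ^ 2)\<^sup>2)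
          + real (card E) ^ 4 / real q ^ 2)"
    using sum_lam_deviation_squared[OF E] by (intro sum.cong refl) simp
  also have "\<dots> = (\<Sum>\<theta>\<in>orth2 R. \<Sum>w\<in>F2. (real (lam R E \<theta> w) - real (card E) ^ 2 / real q ^ 2)\<^sup>2)
        + real (card (orth2 R)) * (real (card E) ^ 4 / real q ^ 2)"
    by (simp add: sum.distrib)
  also have "real (card (orth2 R)) * (real (card E) ^ 4 / real q ^ 2) \<le> (4 * real q) * (real (card E) ^ 4 / real q ^ 2)"
    using card_orth2_le[OF finite_carrier] by (intro mult_right_mono) simp_all
  also have "(4 * real q) * (real (card E) ^ 4 / real q ^ 2) = 4 * (real (card E) ^ 4 / real q)"
    using q_pos by (simp add: power2_eq_square field_simps)
  finally show ?thesis using sum_orth2_lam_deviation_squared_le[OF E] by (simp add: algebra_simps)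
qed

end

lemma orth2_energy_bounds:
  fixes R :: "('a, 'b) ring_scheme" and p n :: nat
  assumes "field R" and "prime p" and "p mod 4 = 3" and "odd n" and card: "card (carrier R) = p ^ n"
    and E: "E \<subseteq> carrier R \<times> carrier R"
  defines "q \<equiv> real (card (carrier R))"
  shows "(\<Sum>\<theta>\<in>orth2 R. \<Sum>w\<in>carrier R \<times> carrier R. (real (lam R E \<theta> w) - real (card E) ^ 2 / q ^ 2)\<^sup>2)
      \<le> 4 * (q * real (card E) powr (5/2))"
    and "(\<Sum>\<theta>\<in>orth2 R. \<Sum>w\<in>carrier R \<times> carrier R. (real (lam R E \<theta> w))\<^sup>2)
      \<le> 4 * (q * real (card E) powr (5/2) + real (card E) ^ 4 / q)"
proof -
  have "finite (carrier R)"
    using card \<open>prime p\<close> by (metis card.infinite not_prime_0 power_not_zero)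
  then interpret finite_field R
    using \<open>field R\<close> by (simp add: finite_field_def finite_field_axioms_def)
  obtain \<psi> :: "'a \<Rightarrow> complex" where \<psi>: "\<forall>x\<in>carrier R. \<forall>y\<in>carrier R. \<psi> (x \<oplus>\<^bsub>R\<^esub> y) = \<psi> x * \<psi> y"
    "\<forall>x. cmod (\<psi> x) = 1" "\<psi> \<one>\<^bsub>R\<^esub> \<noteq> 1"
    using additive_character_exists[OF finite_carrier \<open>prime p\<close>]
      add_pow_one_eq_zero_if_card_power[OF finite_carrier card] by auto
  interpret character_3_mod_4 R \<psi>
    using \<psi> prime_power_mod_4[OF \<open>p mod 4 = 3\<close> \<open>odd n\<close>] card
    by unfold_locales (auto intro: bexI[of _ "\<one>\<^bsub>R\<^esub>"])
  show "(\<Sum>\<theta>\<in>orth2 R. \<Sum>w\<in>carrier R \<times> carrier R. (real (lam R E \<theta> w) - real (card E) ^ 2 / q ^ 2)\<^sup>2)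
      \<le> 4 * (q * real (card E) powr (5/2))"
    using sum_orth2_lam_deviation_squared_le[OF E] by (simp add: q_def)
  show "(\<Sum>\<theta>\<in>orth2 R. \<Sum>w\<in>carrier R \<times> carrier R. (real (lam R E \<theta> w))\<^sup>2)
      \<le> 4 * (q * real (card E) powr (5/2) + real (card E) ^ 4 / q)"
    using sum_orth2_lam_squared_le[OF E] by (simp add: q_def)
qed

theorem lemma2p2:
  "\<exists>C::real. C > 0 \<and>
    (\<forall>(R :: nat ring) (p::nat) (n::nat) (E :: (nat \<times> nat) set).
       field R \<and> prime p \<and> p mod 4 = 3 \<and> odd n \<and> card (carrier R) = p ^ n \<and>
       E \<subseteq> carrier R \<times> carrier R \<longrightarrow>
       (let q = real (card (carrier R)); F2 = carrier R \<times> carrier R in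
         (\<Sum>\<theta>\<in>orth2 R. \<Sum>w\<in>F2. (real (lam R E \<theta> w) - real (card E) ^ 2 / q ^ 2) ^ 2)
            \<le> C * (q * real (card E) powr (5/2)) \<and>
         (\<Sum>\<theta>\<in>orth2 R. \<Sum>w\<in>F2. real (lam R E \<theta> w) ^ 2)
            \<le> C * (q * real (card E) powr (5/2) + real (card E) ^ 4 / q)))"
proof (intro exI[of _ 4] conjI allI impI)
  fix R :: "nat ring" and p n :: nat and E :: "(nat \<times> nat) set"
  assume "field R \<and> prime p \<and> p mod 4 = 3 \<and> odd n \<and> card (carrier R) = p ^ n \<and> E \<subseteq> carrier R \<times> carrier R"
  then show "let q = real (card (carrier R)); F2 = carrier R \<times> carrier R in
      (\<Sum>\<theta>\<in>orth2 R. \<Sum>w\<in>F2. (real (lam R E \<theta> w) - real (card E) ^ 2 / q ^ 2) ^ 2)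
        \<le> 4 * (q * real (card E) powr (5/2)) \<and>
      (\<Sum>\<theta>\<in>orth2 R. \<Sum>w\<in>F2. real (lam R E \<theta> w) ^ 2)
        \<le> 4 * (q * real (card E) powr (5/2) + real (card E) ^ 4 / q)"
    using orth2_energy_bounds[of R p n E] unfolding Let_def by blast
qed simp

end
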